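(* Let $\omega$ be sufficiently small. Let $\mu_j^{\pm} = \pm i \sqrt{\nu_j}$ be the eigenvalues of $A$ with corresponding eigenvectors $V_j^{\pm} = (v_j, - \mu_j^{\pm}v_j)^T$, where $(\nu_j, v_j)$ is the explicit eigensystem of $T_\omega$. The eigenvalues $\xi_j$ of $T_\omega+P$ then satisfy $$ |\xi_j - \nu_j| \sim \omega |v_j(1)|^2,\ j \in [N]$$ and interlace $\xi_1<\nu_1<\xi_2<\nu_2<\dots<\xi_N<\nu_N$ with associated eigenvectors $$w_j = \frac{1}{\sqrt{\sum_{k=1}^N \frac{|v_k(1)|^2}{(\nu_k - \xi_j)^2} } } \left( \sum_{k=1}^N \frac{|v_k(1)|^2}{(\nu_k - \xi_j)}, \sum_{k=1}^N \frac{v_k(1)v_k(2)}{(\nu_k - \xi_j)}, \dots, \sum_{k=1}^N \frac{ v_k(1)v_k(N)}{(\nu_k - \xi_j)} \right)^T.$$ In particular it holds $|w_j(1)|^2 \sim |v_j(1)|^2$. Consequently the eigensystem of $A_\omega$ is $\left(\pm i \sqrt{\xi_j}, W_j^{\pm}\right)$, with $W_j^{\pm} = \left(w_j, \mp i \sqrt{\xi_j} w_j \right)^T,\ j \in [N].$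
   Context: Dirichlet boundary conditions: $\mathscr V_1$ is the $N\times N$ discrete Dirichlet Laplacian (tridiagonal, $2$ on the diagonal, $-1$ off the diagonal) with eigenvalues $\lambda_j = 4\sin^2(\frac{\pi j}{2(N+1)})$ and eigenvectors $v_j(i)=\sqrt{\frac{2}{N+1}}\sin(\frac{ij\pi}{N+1})$. For next-to-nearest-neighbour coupling $\omega$ and pinning $\eta$, $T_\omega = (1+4\omega)\mathscr V_1 - \omega \mathscr V_1^2 + \eta \operatorname{Id}$, with eigenvectors $v_j$ and eigenvalues $\nu_j = (1+4\omega)\lambda_j - \omega\lambda_j^2 + \eta$. $P=\operatorname{diag}(-2\omega,0,\dots,0)$ (rank one), $A=\begin{pmatrix}0&-I\\ T_\omega & 0\end{pmatrix}$ and $A_\omega = \begin{pmatrix}0&-I\\ T_\omega+P & 0\end{pmatrix}$. *)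

theory Defs
  imports "Jordan_Normal_Form.Char_Poly"
begin

text \<open>Matrices/vectors are Jordan_Normal_Form matrices/vectors with
  0-based storage; the paper's 1-based component i corresponds to storage index i-1.
  Eigen-indices j range over 1..N as in the paper.\<close>

definition lapD :: "nat \<Rightarrow> real mat" where
  "lapD N = mat N N (\<lambda>(i,k). if i = k then 2 else if i = k + 1 \<or> k = i + 1 then -1 else 0)"

definition lamD :: "nat \<Rightarrow> nat \<Rightarrow> real" where
  "lamD N j = 4 * (sin (pi * real j / (2 * (real N + 1))))\<^sup>2"

definition vD :: "nat \<Rightarrow> nat \<Rightarrow> nat \<Rightarrow> real" where
  "vD N j i = sqrt (2 / (real N + 1)) * sin (real i * real j * pi / (real N + 1))"

definition vvec :: "nat \<Rightarrow> nat \<Rightarrow> real vec" where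
  "vvec N j = vec N (\<lambda>i. vD N j (i + 1))"

definition Tom :: "nat \<Rightarrow> real \<Rightarrow> real \<Rightarrow> real mat" where
  "Tom N \<omega> \<eta> = (1 + 4 * \<omega>) \<cdot>\<^sub>m lapD N - \<omega> \<cdot>\<^sub>m (lapD N * lapD N) + \<eta> \<cdot>\<^sub>m 1\<^sub>m N"

definition nuT :: "nat \<Rightarrow> real \<Rightarrow> real \<Rightarrow> nat \<Rightarrow> real" where
  "nuT N \<omega> \<eta> j = (1 + 4 * \<omega>) * lamD N j - \<omega> * (lamD N j)\<^sup>2 + \<eta>"

definition Pmat :: "nat \<Rightarrow> real \<Rightarrow> real mat" where
  "Pmat N \<omega> = mat N N (\<lambda>(i,k). if i = 0 \<and> k = 0 then -2 * \<omega> else 0)"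

definition Amat :: "nat \<Rightarrow> real \<Rightarrow> real \<Rightarrow> complex mat" where
  "Amat N \<omega> \<eta> = four_block_mat (0\<^sub>m N N) (- 1\<^sub>m N) (map_mat complex_of_real (Tom N \<omega> \<eta>)) (0\<^sub>m N N)"

definition Aom :: "nat \<Rightarrow> real \<Rightarrow> real \<Rightarrow> complex mat" where
  "Aom N \<omega> \<eta> = four_block_mat (0\<^sub>m N N) (- 1\<^sub>m N)
      (map_mat complex_of_real (Tom N \<omega> \<eta> + Pmat N \<omega>)) (0\<^sub>m N N)"

text \<open>The vector w_j of the paper, as a function of the value xi = xi_j:
  w(i) = (sum_k v_k(1) v_k(i) / (nu_k - xi)) / sqrt (sum_k |v_k(1)|^2 / (nu_k - xi)^2).\<close>
definition wvec :: "nat \<Rightarrow> real \<Rightarrow> real \<Rightarrow> real \<Rightarrow> real vec" where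
  "wvec N \<omega> \<eta> x = vec N (\<lambda>i.
      (\<Sum>k=1..N. vD N k 1 * vD N k (i + 1) / (nuT N \<omega> \<eta> k - x))
      / sqrt (\<Sum>k=1..N. (vD N k 1)\<^sup>2 / (nuT N \<omega> \<eta> k - x)\<^sup>2))"

definition stackv :: "real vec \<Rightarrow> complex \<Rightarrow> complex vec" where
  "stackv u s = map_vec complex_of_real u @\<^sub>v (s \<cdot>\<^sub>v map_vec complex_of_real u)"

end

theory Submission
  imports Defs
begin

text \<open>
  \<open>T\<^sub>\<omega>\<close> is a polynomial in the Dirichlet Laplacian, so it has the eigenvectors \<open>v\<^sub>k\<close>, with
  eigenvalues \<open>\<nu>\<^sub>k\<close>, and \<open>P\<close> has rank one. Pairing \<open>(T\<^sub>\<omega> + P) u = \<xi> u\<close> with \<open>v\<^sub>k\<close> gives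
  \<open>(\<nu>\<^sub>k - \<xi>) \<langle>v\<^sub>k, u\<rangle> = 2\<omega> v\<^sub>k(1) u(1)\<close>; hence the eigenvalues are the roots of the secular
  equation \<open>2\<omega> \<Sum>\<^sub>k v\<^sub>k(1)\<^sup>2 / (\<nu>\<^sub>k - \<xi>) = 1\<close> (real, as the weights are positive), and \<open>w\<^sub>j\<close> is
  the normalised vector \<open>\<Sum>\<^sub>k v\<^sub>k(1) v\<^sub>k / (\<nu>\<^sub>k - \<xi>\<^sub>j)\<close>. The secular function increases strictly
  between its poles, so every gap \<open>(\<nu>\<^bsub>j-1\<^esub>, \<nu>\<^sub>j)\<close> holds at most one root.

  To find that root, write \<open>\<xi> = Tpoly (2 - 2 cos \<phi>)\<close> with \<open>\<phi> = \<theta>\<^sub>j - s\<close>, \<open>\<theta>\<^sub>j = j\<pi> / (N+1)\<close>.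
  Summation by parts against \<open>sin ((N+1-i)\<phi>)\<close> evaluates \<open>\<Sum>\<^sub>k v\<^sub>k(1)\<^sup>2 / (\<lambda>\<^sub>k - 2 + 2 cos \<phi>)\<close> as
  \<open>cos \<phi> + sin \<phi> cot ((N+1)s)\<close>, and comparing the secular equation at \<open>(N+1)s = \<omega> sin \<theta>\<^sub>j\<close>
  and at \<open>(N+1)s = 4\<omega> sin \<theta>\<^sub>j\<close> yields, by the intermediate value theorem, a root with
  \<open>\<nu>\<^sub>j - \<xi>\<^sub>j \<asymp> \<omega> s sin \<theta>\<^sub>j \<asymp> \<omega> v\<^sub>j(1)\<^sup>2\<close>. In the norm of \<open>\<Sum>\<^sub>k v\<^sub>k(1) v\<^sub>k / (\<nu>\<^sub>k - \<xi>\<^sub>j)\<close> the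
  term \<open>k = j\<close> then dominates, since the others are \<open>O (1 / ((k - j)\<^sup>2 v\<^sub>j(1)\<^sup>2))\<close>; this gives
  \<open>w\<^sub>j(1)\<^sup>2 \<asymp> v\<^sub>j(1)\<^sup>2\<close>.

  Finally \<open>A\<^sub>\<omega> (a, b) = z (a, b)\<close> means \<open>b = -z a\<close> and \<open>(T\<^sub>\<omega> + P) a = -z\<^sup>2 a\<close>, so the spectrum of
  \<open>A\<^sub>\<omega>\<close> consists of the numbers \<open>\<plusminus>i \<surd>\<xi>\<^sub>j\<close>, and likewise for \<open>A\<close> and the \<open>\<nu>\<^sub>j\<close>.
\<close>

section \<open>Elementary estimates\<close>

lemma sin_ge_x_cos:
  assumes "0 \<le> x" "x \<le> pi"
  shows "x * cos x \<le> sin x"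
proof -
  have "(\<lambda>t. sin t - t * cos t) 0 \<le> (\<lambda>t. sin t - t * cos t) x"
  proof (rule DERIV_nonneg_imp_nondecreasing[OF assms(1)])
    fix t
    assume "0 \<le> t" "t \<le> x"
    then show "\<exists>y. ((\<lambda>t. sin t - t * cos t) has_real_derivative y) (at t) \<and> 0 \<le> y"
      using assms by (intro exI[of _ "t * sin t"] conjI derivative_eq_intros mult_nonneg_nonneg sin_ge_zero)
        (auto simp: algebra_simps)
  qed
  then show ?thesis
    by simp
qed

lemma cos_ge_1_minus_sq_half: "1 - x\<^sup>2 / 2 \<le> cos (x::real)"
proof -
  have "cos x = 1 - 2 * (sin (x/2))\<^sup>2"
    using cos_double_sin[of "x/2"] by simp
  moreover have "(sin (x/2))\<^sup>2 \<le> (x/2)\<^sup>2"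
    using abs_sin_x_le_abs_x[of "x/2"] by (metis abs_le_square_iff)
  ultimately show ?thesis
    by (simp add: power_divide)
qed

lemma sin_ge_cubic:
  fixes s :: real
  assumes "0 \<le> s" "s \<le> pi"
  shows "s * (1 - s * s / 2) \<le> sin s"
proof -
  have "s * (1 - s * s / 2) \<le> s * cos s"
    using cos_ge_1_minus_sq_half[of s] assms by (intro mult_left_mono) (auto simp: power2_eq_square)
  also have "\<dots> \<le> sin s"
    using assms by (rule sin_ge_x_cos)
  finally show ?thesis .
qed

lemma sin_ge_quarter:
  assumes "0 \<le> x" "x \<le> pi/2"
  shows "x / 4 \<le> sin x"
proof (cases "x \<le> 1")
  case True
  have "x * x\<^sup>2 \<le> x * 1"
    using True assms(1) power_le_one[of x 2] by (intro mult_left_mono) auto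
  then have "x / 4 \<le> x * (1 - x\<^sup>2/2)"
    using assms(1) by (simp add: algebra_simps)
  also have "\<dots> \<le> x * cos x"
    using assms(1) cos_ge_1_minus_sq_half[of x] by (intro mult_left_mono) auto
  also have "\<dots> \<le> sin x"
    using assms by (intro sin_ge_x_cos) auto
  finally show ?thesis .
next
  case False
  have "x / 4 \<le> 1/2"
    using assms pi_less_4 by simp
  also have "\<dots> \<le> 1 * cos 1"
    using cos_ge_1_minus_sq_half[of 1] by simp
  also have "\<dots> \<le> sin 1"
    using pi_ge_two by (intro sin_ge_x_cos) auto
  also have "\<dots> \<le> sin x"
    using False assms by (intro sin_monotone_2pi_le) auto
  finally show ?thesis .
qed

lemma sin_mult_sin_le: "sin a * sin b \<le> (sin ((a + b) / 2))\<^sup>2" for a b :: real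
proof -
  have "2 * ((a + b) / 2) = a + b"
    by simp
  then have "cos (a + b) = 1 - 2 * (sin ((a + b) / 2))\<^sup>2"
    using cos_double_sin[of "(a + b) / 2"] by (simp only:)
  then show ?thesis
    using cos_le_one[of "a - b"] unfolding sin_times_sin by simp
qed

lemma cot_bounds:
  fixes y :: real
  assumes "0 < y" "y \<le> 1"
  shows "(1 - y\<^sup>2 / 2) / y \<le> cos y / sin y" "cos y / sin y \<le> 1 / y"
proof -
  have y_pi: "y < pi"
    using assms pi_ge_two by linarith
  have sin_y: "0 < sin y" "sin y \<le> y"
    using sin_gt_zero[OF assms(1) y_pi] sin_x_le_x[of y] assms by auto
  have "0 \<le> 1 - y\<^sup>2 / 2"
    using assms power_le_one[of y 2] by simp
  then have "(1 - y\<^sup>2 / 2) / y \<le> cos y / y"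
    using cos_ge_1_minus_sq_half[of y] assms by (simp add: divide_right_mono)
  also have "\<dots> \<le> cos y / sin y"
    using sin_y cos_ge_1_minus_sq_half[of y] \<open>0 \<le> 1 - y\<^sup>2 / 2\<close> by (intro divide_left_mono) auto
  finally show "(1 - y\<^sup>2 / 2) / y \<le> cos y / sin y" .
  have "y * cos y \<le> sin y"
    using assms y_pi by (intro sin_ge_x_cos) auto
  then show "cos y / sin y \<le> 1 / y"
    using sin_y assms by (simp add: field_simps)
qed

lemma abs_cos_mult_versine_le: "\<bar>2 * cos \<theta> * (1 - cos s)\<bar> \<le> s * s" for \<theta> s :: real
proof -
  have cos_s: "0 \<le> 1 - cos s" "1 - cos s \<le> s * s / 2"
    using cos_ge_1_minus_sq_half[of s] by (auto simp: power2_eq_square)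
  have "\<bar>2 * cos \<theta> * (1 - cos s)\<bar> = 2 * \<bar>cos \<theta>\<bar> * (1 - cos s)"
    using cos_s by (simp add: abs_mult)
  also have "\<dots> \<le> 2 * 1 * (1 - cos s)"
    using cos_s by (intro mult_right_mono mult_left_mono) auto
  finally show ?thesis
    using cos_s by simp
qed

lemma sin_shift_bounds:
  fixes \<theta> s w :: real
  assumes sin_\<theta>: "0 \<le> sin \<theta>" and s: "0 \<le> s" "s \<le> 4 * w * sin \<theta>" "s \<le> 1"
  shows "sin \<theta> * (1 - 6 * w) \<le> sin (\<theta> - s)" "sin (\<theta> - s) \<le> sin \<theta> * (1 + 4 * w)"
proof -
  have cos_s: "1 - s\<^sup>2 / 2 \<le> cos s" "cos s \<le> 1"
    using cos_ge_1_minus_sq_half[of s] by auto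
  have sin_s: "0 \<le> sin s" "sin s \<le> s"
    using s pi_ge_two by (auto intro!: sin_ge_zero sin_x_le_x)
  then have "\<bar>cos \<theta>\<bar> * sin s \<le> 1 * sin s"
    by (intro mult_right_mono) auto
  then have cos_sin: "\<bar>cos \<theta> * sin s\<bar> \<le> s"
    using sin_s by (simp add: abs_mult)
  have "s\<^sup>2 \<le> s"
    using s by (simp add: power2_eq_square mult_left_le_one_le)
  then have "sin \<theta> * (s\<^sup>2 / 2) \<le> 1 * (s / 2)"
    using sin_\<theta> sin_le_one[of \<theta>] by (intro mult_mono) auto
  then have "sin \<theta> * (1 - s\<^sup>2 / 2) \<ge> sin \<theta> - s / 2"
    by (simp add: algebra_simps)
  moreover have "sin \<theta> * (1 - s\<^sup>2 / 2) \<le> sin \<theta> * cos s" "sin \<theta> * cos s \<le> sin \<theta>"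
    using cos_s sin_\<theta> by (auto intro: mult_left_mono simp: mult_left_le)
  ultimately show "sin \<theta> * (1 - 6 * w) \<le> sin (\<theta> - s)" "sin (\<theta> - s) \<le> sin \<theta> * (1 + 4 * w)"
    using cos_sin s unfolding sin_diff by (simp_all add: algebra_simps abs_le_iff)
qed

lemma scaled_sin_bounds:
  fixes c \<theta> :: real
  assumes "0 < c" "0 < sin \<theta>"
  shows "0 < c * sin \<theta>" "c * sin \<theta> \<le> c"
  using assms mult_left_mono[OF sin_le_one[of \<theta>], of c] by simp_all

lemma sum_inverse_squares_le: "(\<Sum>m=1..n. 1 / (real m)\<^sup>2) \<le> 2 - 1 / real n"
proof (induction n)
  case 0
  then show ?case by simp
next
  case (Suc n)
  show ?case
  proof (cases "n = 0")
    case False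
    then have n: "1 \<le> real n"
      by simp
    have "real n * (real n + 1) \<le> (real n + 1)\<^sup>2"
      by (simp add: power2_eq_square)
    then have "1 / (real n + 1)\<^sup>2 \<le> 1 / (real n * (real n + 1))"
      using n by (intro divide_left_mono) auto
    also have "\<dots> = 1 / real n - 1 / (real n + 1)"
      using n by (simp add: field_simps)
    finally have "1 / (real n + 1)\<^sup>2 \<le> 1 / real n - 1 / (real n + 1)" .
    moreover have "(\<Sum>m=1..Suc n. 1 / (real m)\<^sup>2) = (\<Sum>m=1..n. 1 / (real m)\<^sup>2) + 1 / (real n + 1)\<^sup>2"
      by simp
    moreover have "real (Suc n) = real n + 1"
      by simp
    ultimately show ?thesis
      using Suc.IH by (simp only:)
  qed simp
qed

section \<open>Eigenvectors of the Dirichlet Laplacian\<close>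

lemma sum_cos_multiples_telescope:
  fixes a :: real
  shows "2 * sin (a/2) * (\<Sum>i=1..n. cos (real i * a)) = sin ((real n + 1/2) * a) - sin (a/2)"
proof (induction n)
  case 0
  then show ?case by simp
next
  case (Suc n)
  have "((real n + 3/2) * a - (real n + 1/2) * a) / 2 = a/2"
    and "((real n + 3/2) * a + (real n + 1/2) * a) / 2 = (real n + 1) * a"
    by (simp_all add: field_simps)
  then have "sin ((real n + 3/2) * a) - sin ((real n + 1/2) * a) = 2 * sin (a/2) * cos ((real n + 1) * a)"
    unfolding sin_diff_sin by (simp only:)
  with Suc show ?case by (simp add: distrib_left field_simps)
qed

lemma sum_cos_multiples:
  assumes "0 < m" "m < 2 * N + 2"
  shows "(\<Sum>i=1..N. cos (real i * (real m * pi / (real N + 1)))) = - (1 + (-1)^m) / 2"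
proof -
  define a where "a = real m * pi / (real N + 1)"
  have "real m * pi < (2 * real N + 2) * pi"
    using assms by simp
  then have "0 < a/2" "a/2 < pi"
    using assms by (auto simp: a_def field_simps)
  then have sin_pos: "sin (a/2) > 0"
    by (rule sin_gt_zero)
  have "(real N + 1/2) * a = real m * pi - a/2"
    by (simp add: a_def field_simps)
  then have "sin ((real N + 1/2) * a) = - ((-1)^m) * sin (a/2)"
    by (simp add: sin_diff)
  then have "2 * sin (a/2) * (\<Sum>i=1..N. cos (real i * a)) = 2 * sin (a/2) * (- (1 + (-1)^m) / 2)"
    using sum_cos_multiples_telescope[of a N] by (simp add: algebra_simps)
  with sin_pos show ?thesis
    unfolding a_def by simp
qed

lemma vD_commute: "vD N j i = vD N i j"
  unfolding vD_def by (simp add: mult.commute)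

lemma vD_mult_vD:
  "vD N j i * vD N k i
     = (cos (real i * ((real j - real k) * pi / (real N + 1)))
        - cos (real i * (real (j + k) * pi / (real N + 1)))) / (real N + 1)"
proof -
  define M where "M = real N + 1"
  have M: "M > 0"
    by (simp add: M_def)
  have "vD N j i * vD N k i
      = (sqrt (2 / M) * sqrt (2 / M)) * (sin (real i * real j * pi / M) * sin (real i * real k * pi / M))"
    unfolding vD_def M_def[symmetric] by (simp only: mult_ac)
  also have "sqrt (2 / M) * sqrt (2 / M) = 2 / M"
    using M by simp
  also have "(2 / M) * (sin (real i * real j * pi / M) * sin (real i * real k * pi / M))
      = (cos (real i * real j * pi / M - real i * real k * pi / M)
         - cos (real i * real j * pi / M + real i * real k * pi / M)) / M"
    unfolding sin_times_sin using M by (simp add: field_simps)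
  also have "real i * real j * pi / M - real i * real k * pi / M = real i * ((real j - real k) * pi / M)"
    by (simp add: diff_divide_distrib right_diff_distrib left_diff_distrib)
  also have "real i * real j * pi / M + real i * real k * pi / M = real i * (real (j + k) * pi / M)"
    by (simp add: distrib_left distrib_right add_divide_distrib)
  finally show ?thesis
    unfolding M_def .
qed

lemma vD_orthonormal:
  assumes "j \<in> {1..N}" "k \<in> {1..N}"
  shows "(\<Sum>i=1..N. vD N j i * vD N k i) = (if j = k then 1 else 0)"
proof -
  define M where "M = real N + 1"
  define S where "S m = (\<Sum>i=1..N. cos (real i * (real m * pi / M)))" for m :: nat
  have S: "S m = - (1 + (-1)^m) / 2" if "0 < m" "m < 2 * N + 2" for m
    unfolding S_def M_def using that by (rule sum_cos_multiples)
  have jk: "S (j + k) = - (1 + (-1)^(j+k)) / 2"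
    using assms by (intro S) auto
  have "(\<Sum>i=1..N. vD N j i * vD N k i)
      = ((\<Sum>i=1..N. cos (real i * ((real j - real k) * pi / M))) - S (j + k)) / M"
    by (simp only: vD_mult_vD S_def M_def sum_divide_distrib[symmetric] sum_subtractf)
  also have "\<dots> = (if j = k then 1 else 0)"
  proof (cases "j = k")
    case True
    then have "(-1::real)^(j+k) = 1"
      by (simp flip: mult_2)
    with True jk show ?thesis
      by (simp add: M_def)
  next
    case False
    define d where "d = (if k \<le> j then j - k else k - j)"
    have "cos (real i * ((real j - real k) * pi / M)) = cos (real i * (real d * pi / M))" for i
    proof (cases "k \<le> j")
      case False
      have "real i * ((real j - real k) * pi / M) = - (real i * (real d * pi / M))"
        using False by (simp add: d_def of_nat_diff field_simps diff_divide_distrib)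
      then show ?thesis
        by (metis cos_minus)
    qed (simp add: d_def of_nat_diff)
    then have "(\<Sum>i=1..N. cos (real i * ((real j - real k) * pi / M))) = S d"
      unfolding S_def by simp
    also have "\<dots> = - (1 + (-1)^d) / 2"
      using False assms by (intro S) (auto simp: d_def)
    also have "(-1::real)^d = (-1)^(j+k)"
    proof -
      have "j + k = d + 2 * min j k"
        by (auto simp: d_def)
      then show ?thesis
        by (simp add: power_add power_mult)
    qed
    finally show ?thesis
      using False jk by simp
  qed
  finally show ?thesis .
qed

lemma vD_orthonormal':
  assumes "i \<in> {1..N}" "l \<in> {1..N}"
  shows "(\<Sum>k=1..N. vD N k i * vD N k l) = (if i = l then 1 else 0)"
  using vD_orthonormal[OF assms] by (simp add: vD_commute[of N _ i] vD_commute[of N _ l])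

lemma sum_vD_1_sq: "1 \<le> N \<Longrightarrow> (\<Sum>k=1..N. (vD N k 1)\<^sup>2) = 1"
  using vD_orthonormal'[of 1 N 1] by (simp add: power2_eq_square)

lemma vD_0 [simp]: "vD N k 0 = 0"
  by (simp add: vD_def)

lemma vD_Suc_N: "vD N k (N + 1) = 0"
proof -
  have "real (N + 1) * real k * pi / (real N + 1) = real k * pi"
    by (simp add: field_simps)
  then show ?thesis
    by (simp add: vD_def del: of_nat_Suc)
qed

lemma angle_less_pi:
  assumes "k \<le> N"
  shows "real k * pi / (real N + 1) < pi"
proof -
  have "real k * pi < (real N + 1) * pi"
    using assms by (intro mult_strict_right_mono) auto
  then show ?thesis
    by (simp add: divide_less_eq add_pos_pos)
qed

lemma vD_1_pos:
  assumes "k \<in> {1..N}"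
  shows "0 < vD N k 1"
proof -
  have "0 < real k * pi / (real N + 1)"
    using assms by auto
  moreover have "real k * pi / (real N + 1) < pi"
    using assms angle_less_pi[of k N] by simp
  ultimately show ?thesis
    by (simp add: vD_def sin_gt_zero)
qed

lemma lamD_eq_cos: "lamD N k = 2 - 2 * cos (real k * pi / (real N + 1))"
proof -
  have "real k * pi / (real N + 1) = 2 * (pi * real k / (2 * (real N + 1)))"
    by (simp add: field_simps)
  then have "cos (real k * pi / (real N + 1)) = 1 - 2 * (sin (pi * real k / (2 * (real N + 1))))\<^sup>2"
    by (simp only: cos_double_sin)
  then show ?thesis
    unfolding lamD_def by simp
qed

lemma vD_three_term:
  assumes "1 \<le> i"
  shows "vD N k (i - 1) + vD N k (i + 1) = (2 - lamD N k) * vD N k i"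
proof -
  define x where "x = real k * pi / (real N + 1)"
  have "real (i - 1) * real k * pi / (real N + 1) = real i * x - x"
    using assms by (simp add: x_def of_nat_diff left_diff_distrib diff_divide_distrib)
  moreover have "real (i + 1) * real k * pi / (real N + 1) = real i * x + x"
    by (simp add: x_def distrib_right add_divide_distrib)
  moreover have "real i * real k * pi / (real N + 1) = real i * x"
    by (simp add: x_def)
  moreover have "sin (real i * x - x) + sin (real i * x + x) = (2 - (2 - 2 * cos x)) * sin (real i * x)"
    by (simp add: sin_diff sin_add)
  ultimately show ?thesis
    unfolding vD_def lamD_eq_cos x_def[symmetric] distrib_left[symmetric] by (simp only: mult.left_commute)
qed

lemma lapD_carrier [simp]: "lapD N \<in> carrier_mat N N"
  by (simp add: lapD_def)

lemma Pmat_carrier [simp]: "Pmat N w \<in> carrier_mat N N"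
  by (simp add: Pmat_def)

lemma Tom_carrier [simp]: "Tom N w e \<in> carrier_mat N N"
  by (simp add: Tom_def)

lemma vvec_carrier [simp]: "vvec N k \<in> carrier_vec N"
  by (simp add: vvec_def)

lemma dim_lapD [simp]: "dim_row (lapD N) = N" "dim_col (lapD N) = N"
  by (simp_all add: lapD_def)

lemma dim_Pmat [simp]: "dim_row (Pmat N w) = N" "dim_col (Pmat N w) = N"
  by (simp_all add: Pmat_def)

lemma dim_Tom [simp]: "dim_row (Tom N w e) = N" "dim_col (Tom N w e) = N"
  by (simp_all add: Tom_def)

lemma lapD_mult_vec_nth:
  assumes x: "x \<in> carrier_vec N" and i: "i < N"
  shows "(lapD N *\<^sub>v x) $ i
    = 2 * x $ i - (if 0 < i then x $ (i - 1) else 0) - (if i + 1 < N then x $ (i + 1) else 0)"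
proof -
  have "(lapD N *\<^sub>v x) $ i
      = (\<Sum>l\<in>{0..<N}. (if i = l then 2 else if i = l + 1 \<or> l = i + 1 then -1 else 0) * x $ l)"
    using x i by (simp add: lapD_def scalar_prod_def)
  also have "\<dots> = (\<Sum>l\<in>{0..<N}. (if l = i then 2 * x $ i else 0)
      - (if 0 < i then (if l = i - 1 then x $ (i - 1) else 0) else 0)
      - (if l = i + 1 then x $ (i + 1) else 0))"
    by (rule sum.cong) auto
  also have "\<dots> = 2 * x $ i - (if 0 < i then x $ (i - 1) else 0) - (if i + 1 < N then x $ (i + 1) else 0)"
    using i by (simp add: sum_subtractf sum.delta')
  finally show ?thesis .
qed

lemma lapD_mult_vvec: "lapD N *\<^sub>v vvec N k = lamD N k \<cdot>\<^sub>v vvec N k"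
proof (rule eq_vecI)
  fix i
  assume "i < dim_vec (lamD N k \<cdot>\<^sub>v vvec N k)"
  then have i: "i < N"
    by (simp add: vvec_def)
  have "(if i + 1 < N then vvec N k $ (i + 1) else 0) = vD N k (i + 2)"
  proof (cases "i + 1 < N")
    case False
    with i have "i + 2 = N + 1"
      by simp
    with False show ?thesis
      using vD_Suc_N[of N k] by simp
  qed (simp add: vvec_def)
  moreover have "(if 0 < i then vvec N k $ (i - 1) else 0) = vD N k i"
    using i by (auto simp: vvec_def)
  ultimately have "(lapD N *\<^sub>v vvec N k) $ i = 2 * vD N k (i + 1) - vD N k i - vD N k (i + 2)"
    using lapD_mult_vec_nth[OF vvec_carrier i] i by (simp add: vvec_def)
  also have "\<dots> = lamD N k * vD N k (i + 1)"
    using vD_three_term[of "i + 1" N k] by (simp add: algebra_simps)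
  finally show "(lapD N *\<^sub>v vvec N k) $ i = (lamD N k \<cdot>\<^sub>v vvec N k) $ i"
    using i by (simp add: vvec_def)
qed (simp add: vvec_def)

lemma smult_mat_mult_vec:
  "A \<in> carrier_mat n m \<Longrightarrow> v \<in> carrier_vec m \<Longrightarrow> (a \<cdot>\<^sub>m A) *\<^sub>v v = a \<cdot>\<^sub>v (A *\<^sub>v v)"
  by (intro eq_vecI) (auto simp: scalar_prod_def sum_distrib_left mult.assoc)

lemma Tom_mult_vec:
  assumes x: "x \<in> carrier_vec N"
  shows "Tom N w e *\<^sub>v x
    = (1 + 4 * w) \<cdot>\<^sub>v (lapD N *\<^sub>v x) - w \<cdot>\<^sub>v (lapD N *\<^sub>v (lapD N *\<^sub>v x)) + e \<cdot>\<^sub>v x"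
proof -
  have c: "(1 + 4 * w) \<cdot>\<^sub>m lapD N \<in> carrier_mat N N" "w \<cdot>\<^sub>m (lapD N * lapD N) \<in> carrier_mat N N"
    "e \<cdot>\<^sub>m 1\<^sub>m N \<in> carrier_mat N N" "lapD N * lapD N \<in> carrier_mat N N"
    using mult_carrier_mat[OF lapD_carrier lapD_carrier, of N] by auto
  have "Tom N w e *\<^sub>v x
      = ((1 + 4 * w) \<cdot>\<^sub>m lapD N) *\<^sub>v x - (w \<cdot>\<^sub>m (lapD N * lapD N)) *\<^sub>v x + (e \<cdot>\<^sub>m 1\<^sub>m N) *\<^sub>v x"
    unfolding Tom_def add_mult_distrib_mat_vec[OF minus_carrier_mat[OF c(2)] c(3) x]
      minus_mult_distrib_mat_vec[OF c(1,2) x] ..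
  also have "\<dots> = (1 + 4 * w) \<cdot>\<^sub>v (lapD N *\<^sub>v x) - w \<cdot>\<^sub>v (lapD N *\<^sub>v (lapD N *\<^sub>v x)) + e \<cdot>\<^sub>v x"
    using x by (simp add: smult_mat_mult_vec[OF lapD_carrier x] smult_mat_mult_vec[OF c(4) x]
        smult_mat_mult_vec[OF one_carrier_mat x] assoc_mult_mat_vec[OF lapD_carrier lapD_carrier x])
  finally show ?thesis .
qed

lemma Tom_mult_vvec: "Tom N w e *\<^sub>v vvec N k = nuT N w e k \<cdot>\<^sub>v vvec N k"
  unfolding Tom_mult_vec[OF vvec_carrier] lapD_mult_vvec mult_mat_vec[OF lapD_carrier vvec_carrier]
  by (rule eq_vecI) (auto simp: vvec_def nuT_def power2_eq_square algebra_simps)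

lemma transpose_smult_mat: "transpose_mat (a \<cdot>\<^sub>m A) = a \<cdot>\<^sub>m transpose_mat A"
  by (intro eq_matI) auto

lemma transpose_lapD: "transpose_mat (lapD N) = lapD N"
  by (intro eq_matI) (auto simp: lapD_def)

lemma transpose_Tom: "transpose_mat (Tom N w e) = Tom N w e"
proof -
  have c: "(1 + 4 * w) \<cdot>\<^sub>m lapD N \<in> carrier_mat N N" "w \<cdot>\<^sub>m (lapD N * lapD N) \<in> carrier_mat N N"
    "e \<cdot>\<^sub>m 1\<^sub>m N \<in> carrier_mat N N"
    using mult_carrier_mat[OF lapD_carrier lapD_carrier, of N] by auto
  show ?thesis
    unfolding Tom_def
    by (simp add: transpose_add[OF minus_carrier_mat[OF c(2)] c(3)] transpose_minus[OF c(1,2)]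
        transpose_smult_mat transpose_mult[OF lapD_carrier lapD_carrier] transpose_lapD)
qed

lemma vec_expand_vvec:
  fixes u :: "'a::real_field vec"
  assumes u: "u \<in> carrier_vec N" and i: "i < N"
  shows "u $ i = (\<Sum>k=1..N. (map_vec of_real (vvec N k) \<bullet> u) * of_real (vD N k (i + 1)))"
proof -
  have "(\<Sum>k=1..N. (map_vec of_real (vvec N k) \<bullet> u) * of_real (vD N k (i + 1)))
      = (\<Sum>k=1..N. \<Sum>l<N. of_real (vD N k (l + 1)) * u $ l * of_real (vD N k (i + 1)))"
    using u by (simp add: scalar_prod_def vvec_def sum_distrib_right atLeast0LessThan)
  also have "\<dots> = (\<Sum>l<N. u $ l * of_real (\<Sum>k=1..N. vD N k (l + 1) * vD N k (i + 1)))"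
    by (subst sum.swap) (simp add: sum_distrib_left mult_ac)
  also have "\<dots> = (\<Sum>l<N. if l = i then u $ i else 0)"
  proof (intro sum.cong refl)
    fix l
    assume "l \<in> {..<N}"
    then have "(\<Sum>k=1..N. vD N k (l + 1) * vD N k (i + 1)) = (if l = i then 1 else 0)"
      using i vD_orthonormal'[of "l + 1" N "i + 1"] by simp
    then show "u $ l * of_real (\<Sum>k=1..N. vD N k (l + 1) * vD N k (i + 1)) = (if l = i then u $ i else 0)"
      by simp
  qed
  also have "\<dots> = u $ i"
    using i by simp
  finally show ?thesis by simp
qed

lemma mult_vec_sum_vvec:
  assumes A: "A \<in> carrier_mat N N"
    and eig: "\<And>k. k \<in> {1..N} \<Longrightarrow> A *\<^sub>v vvec N k = \<mu> k \<cdot>\<^sub>v vvec N k"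
  shows "A *\<^sub>v vec N (\<lambda>i. \<Sum>k=1..N. b k * vD N k (i + 1))
    = vec N (\<lambda>i. \<Sum>k=1..N. b k * \<mu> k * vD N k (i + 1))"
proof (rule eq_vecI)
  fix i
  assume "i < dim_vec (vec N (\<lambda>i. \<Sum>k=1..N. b k * \<mu> k * vD N k (i + 1)))"
  then have i: "i < N"
    by simp
  have col: "(\<Sum>l<N. A $$ (i, l) * vD N k (l + 1)) = \<mu> k * vD N k (i + 1)" if "k \<in> {1..N}" for k
  proof -
    have "(\<Sum>l<N. A $$ (i, l) * vD N k (l + 1)) = (A *\<^sub>v vvec N k) $ i"
      using A i by (simp add: scalar_prod_def vvec_def atLeast0LessThan)
    then show ?thesis
      using eig[OF that] i by (simp add: vvec_def)
  qed
  have "(A *\<^sub>v vec N (\<lambda>i. \<Sum>k=1..N. b k * vD N k (i + 1))) $ i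
      = (\<Sum>l<N. A $$ (i, l) * (\<Sum>k=1..N. b k * vD N k (l + 1)))"
    using A i by (simp add: scalar_prod_def atLeast0LessThan)
  also have "\<dots> = (\<Sum>k=1..N. b k * (\<Sum>l<N. A $$ (i, l) * vD N k (l + 1)))"
    by (simp add: sum_distrib_left sum_distrib_right mult_ac) (rule sum.swap)
  also have "\<dots> = (\<Sum>k=1..N. b k * \<mu> k * vD N k (i + 1))"
    using col by (intro sum.cong refl) (simp add: mult.assoc)
  finally show "(A *\<^sub>v vec N (\<lambda>i. \<Sum>k=1..N. b k * vD N k (i + 1))) $ i
      = vec N (\<lambda>i. \<Sum>k=1..N. b k * \<mu> k * vD N k (i + 1)) $ i"
    using i by simp
qed (use A in simp)

section \<open>Ordering of the unperturbed spectrum\<close>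

definition Tpoly :: "real \<Rightarrow> real \<Rightarrow> real \<Rightarrow> real" where
  "Tpoly w e r = (1 + 4 * w) * r - w * r\<^sup>2 + e"

lemma nuT_eq_Tpoly: "nuT N w e k = Tpoly w e (lamD N k)"
  by (simp add: nuT_def Tpoly_def)

lemma Tpoly_diff: "Tpoly w e b - Tpoly w e a = (b - a) * (1 + 4 * w - w * (a + b))"
  by (simp add: Tpoly_def power2_eq_square algebra_simps)

lemma nuT_minus_Tpoly:
  "nuT N w e k - Tpoly w e r = (lamD N k - r) * (1 + 4 * w - w * (lamD N k + r))"
  using Tpoly_diff[of w e "lamD N k" r] by (simp add: nuT_eq_Tpoly add.commute)

lemma Tpoly_slope_bounds:
  fixes a b w :: real
  assumes "0 \<le> a" "a \<le> 4" "0 \<le> b" "b \<le> 4" "0 \<le> w"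
  shows "1 - 4 * w \<le> 1 + 4 * w - w * (a + b)" "1 + 4 * w - w * (a + b) \<le> 1 + 4 * w"
proof -
  have "0 \<le> w * (a + b)" "w * (a + b) \<le> w * 8"
    using assms by (auto intro: mult_left_mono)
  then show "1 - 4 * w \<le> 1 + 4 * w - w * (a + b)" "1 + 4 * w - w * (a + b) \<le> 1 + 4 * w"
    by linarith+
qed

lemma Tpoly_strict_mono:
  assumes "0 \<le> a" "a < b" "b \<le> 4" "0 \<le> w" "w < 1/4"
  shows "Tpoly w e a < Tpoly w e b"
proof -
  have "0 < 1 + 4 * w - w * (a + b)"
    using Tpoly_slope_bounds(1)[of a b w] assms by linarith
  then have "0 < (b - a) * (1 + 4 * w - w * (a + b))"
    using assms by simp
  then show ?thesis
    using Tpoly_diff[of w e b a] by linarith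
qed

lemma Tpoly_inj:
  assumes "0 \<le> a" "a \<le> 4" "0 \<le> b" "b \<le> 4" "0 \<le> w" "w < 1/4" "Tpoly w e a = Tpoly w e b"
  shows "a = b"
  using Tpoly_strict_mono[of a b w e] Tpoly_strict_mono[of b a w e] assms
  by (cases a b rule: linorder_cases) auto

lemma lamD_bounds: "0 \<le> lamD N k" "lamD N k \<le> 4"
proof -
  have "(sin (pi * real k / (2 * (real N + 1))))\<^sup>2 \<le> 1"
    by (simp add: sin_squared_eq)
  then show "0 \<le> lamD N k" "lamD N k \<le> 4"
    by (auto simp: lamD_def)
qed

lemma lamD_strict_mono:
  assumes "j < k" "k \<le> N"
  shows "lamD N j < lamD N k"
proof -
  have "real j * pi / (real N + 1) < real k * pi / (real N + 1)"
    using assms by (simp add: divide_strict_right_mono)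
  then have "cos (real k * pi / (real N + 1)) < cos (real j * pi / (real N + 1))"
    using angle_less_pi[OF assms(2)] by (subst cos_mono_less_eq) auto
  then show ?thesis
    by (simp add: lamD_eq_cos)
qed

lemma lamD_mono:
  assumes "j \<le> k" "k \<le> N"
  shows "lamD N j \<le> lamD N k"
  using lamD_strict_mono[of j k N] assms by (cases "j = k") auto

lemma nuT_strict_mono:
  assumes "j < k" "k \<le> N" "0 \<le> w" "w < 1/4"
  shows "nuT N w e j < nuT N w e k"
  unfolding nuT_eq_Tpoly
  using assms lamD_strict_mono[OF assms(1,2)] lamD_bounds by (intro Tpoly_strict_mono) auto

lemma nuT_mono:
  assumes "j \<le> k" "k \<le> N" "0 \<le> w" "w < 1/4"
  shows "nuT N w e j \<le> nuT N w e k"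
  using nuT_strict_mono[of j k N w e] assms by (cases "j = k") auto

lemma nuT_inj:
  assumes "j \<le> N" "k \<le> N" "0 \<le> w" "w < 1/4" "nuT N w e j = nuT N w e k"
  shows "j = k"
  using nuT_strict_mono[of j k N w e] nuT_strict_mono[of k j N w e] assms
  by (cases j k rule: linorder_cases) auto

lemma nuT_ge_eta:
  assumes "0 \<le> w" "w < 1/4" "k \<le> N"
  shows "e \<le> nuT N w e k"
  using nuT_mono[of 0 k N w e] assms by (simp add: nuT_def lamD_def)

section \<open>The secular equation of the rank-one perturbation\<close>

definition secular :: "nat \<Rightarrow> real \<Rightarrow> real \<Rightarrow> real \<Rightarrow> real" where
  "secular N w e x = (\<Sum>k=1..N. (vD N k 1)\<^sup>2 / (nuT N w e k - x))"

abbreviation cvvec :: "nat \<Rightarrow> nat \<Rightarrow> complex vec" where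
  "cvvec N k \<equiv> map_vec complex_of_real (vvec N k)"

lemma map_mat_of_real_add:
  "A \<in> carrier_mat n m \<Longrightarrow> B \<in> carrier_mat n m \<Longrightarrow>
    map_mat of_real (A + B) = map_mat of_real A + map_mat of_real B"
  by (intro eq_matI) auto

lemma of_real_Tom_mult_cvvec:
  "map_mat complex_of_real (Tom N w e) *\<^sub>v cvvec N k = complex_of_real (nuT N w e k) \<cdot>\<^sub>v cvvec N k"
proof -
  have "map_vec complex_of_real (Tom N w e *\<^sub>v vvec N k) = map_mat complex_of_real (Tom N w e) *\<^sub>v cvvec N k"
    by (rule of_real_hom.mult_mat_vec_hom[OF Tom_carrier vvec_carrier])
  then show ?thesis
    by (simp add: Tom_mult_vvec of_real_hom.vec_hom_smult)
qed

lemma of_real_Pmat_mult_vec: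
  fixes u :: "'a::real_algebra_1 vec"
  assumes u: "u \<in> carrier_vec N"
  shows "map_mat of_real (Pmat N w) *\<^sub>v u = vec N (\<lambda>i. if i = 0 then of_real (-2 * w) * u $ 0 else 0)"
proof (rule eq_vecI)
  fix i
  assume "i < dim_vec (vec N (\<lambda>i. if i = 0 then of_real (-2 * w) * u $ 0 else 0))"
  then have i: "i < N"
    by simp
  have "(map_mat of_real (Pmat N w) *\<^sub>v u) $ i
      = (\<Sum>l\<in>{0..<N}. of_real (if i = 0 \<and> l = 0 then -2 * w else 0) * u $ l)"
    using i u by (simp add: Pmat_def scalar_prod_def)
  also have "\<dots> = (\<Sum>l\<in>{0..<N}. if l = 0 then (if i = 0 then of_real (-2 * w) * u $ 0 else 0) else 0)"
    by (rule sum.cong) auto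
  finally show "(map_mat of_real (Pmat N w) *\<^sub>v u) $ i
      = vec N (\<lambda>i. if i = 0 then of_real (-2 * w) * u $ 0 else 0) $ i"
    using i by simp
qed (simp add: Pmat_def)

lemma Pmat_mult_vec:
  assumes "u \<in> carrier_vec N"
  shows "Pmat N w *\<^sub>v u = vec N (\<lambda>i. if i = 0 then -2 * w * u $ 0 else 0)"
proof -
  have "map_mat of_real (Pmat N w) = Pmat N w"
    by (intro eq_matI) auto
  then show ?thesis
    using of_real_Pmat_mult_vec[OF assms, of w] by (intro eq_vecI) (auto simp: of_real_def)
qed

lemma scalar_prod_symmetric_eigen:
  fixes A :: "'a::comm_ring_1 mat"
  assumes "transpose_mat A = A" "A \<in> carrier_mat n n" "v \<in> carrier_vec n" "u \<in> carrier_vec n"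
    "A *\<^sub>v v = c \<cdot>\<^sub>v v"
  shows "v \<bullet> (A *\<^sub>v u) = c * (v \<bullet> u)"
  using transpose_vec_mult_scalar[OF assms(2,4,3)] assms by simp

text \<open>Pairing the eigenvalue equation with \<open>v\<^sub>k\<close>, the symmetry of \<open>T\<^sub>\<omega>\<close> and the rank one of \<open>P\<close>
  determine every coefficient \<open>\<langle>v\<^sub>k, u\<rangle>\<close> by the single entry \<open>u(1)\<close>.\<close>

lemma Tom_Pmat_eigenvector_coeff:
  assumes ev: "eigenvector (map_mat complex_of_real (Tom N w e + Pmat N w)) u x"
    and k: "k \<in> {1..N}"
  shows "(complex_of_real (nuT N w e k) - x) * (cvvec N k \<bullet> u)
    = complex_of_real (2 * w * vD N k 1) * u $ 0"
proof -
  define cT where "cT = map_mat complex_of_real (Tom N w e)"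
  define cP where "cP = map_mat complex_of_real (Pmat N w)"
  have cT: "cT \<in> carrier_mat N N" and cP: "cP \<in> carrier_mat N N" and cv: "cvvec N k \<in> carrier_vec N"
    by (auto simp: cT_def cP_def)
  have u: "u \<in> carrier_vec N" and eq: "(cT + cP) *\<^sub>v u = x \<cdot>\<^sub>v u"
    using ev unfolding eigenvector_def cT_def cP_def
    by (auto simp: map_mat_of_real_add[OF Tom_carrier Pmat_carrier])
  have N: "0 < N"
    using k by simp
  have "x * (cvvec N k \<bullet> u) = cvvec N k \<bullet> ((cT + cP) *\<^sub>v u)"
    using eq u cv by simp
  also have "\<dots> = cvvec N k \<bullet> (cT *\<^sub>v u) + cvvec N k \<bullet> (cP *\<^sub>v u)"
    unfolding add_mult_distrib_mat_vec[OF cT cP u]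
    by (rule scalar_prod_add_distrib[OF cv mult_mat_vec_carrier[OF cT u] mult_mat_vec_carrier[OF cP u]])
  also have "cvvec N k \<bullet> (cT *\<^sub>v u) = complex_of_real (nuT N w e k) * (cvvec N k \<bullet> u)"
    unfolding cT_def
    by (rule scalar_prod_symmetric_eigen[OF _ _ cv u])
      (auto simp: map_mat_transpose transpose_Tom of_real_Tom_mult_cvvec)
  also have "cvvec N k \<bullet> (cP *\<^sub>v u) = - complex_of_real (2 * w * vD N k 1) * u $ 0"
    unfolding cP_def of_real_Pmat_mult_vec[OF u] using N
    by (simp add: scalar_prod_def vvec_def if_distrib[of "\<lambda>t. _ * t"] cong: if_cong)
  finally show ?thesis
    by (simp add: algebra_simps)
qed

lemma Tom_Pmat_eigenvector_nth_0:
  assumes ev: "eigenvector (map_mat complex_of_real (Tom N w e + Pmat N w)) u x"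
    and w: "0 \<le> w" "w < 1/4"
  shows "u $ 0 \<noteq> 0"
proof
  assume u0: "u $ 0 = 0"
  have u: "u \<in> carrier_vec N" "u \<noteq> 0\<^sub>v N"
    using ev unfolding eigenvector_def by auto
  define c where "c k = cvvec N k \<bullet> u" for k
  have expand: "u $ i = (\<Sum>k=1..N. c k * complex_of_real (vD N k (i + 1)))" if "i < N" for i
    unfolding c_def using vec_expand_vvec[OF u(1) that] by simp
  have c_eq: "(complex_of_real (nuT N w e k) - x) * c k = 0" if "k \<in> {1..N}" for k
    using Tom_Pmat_eigenvector_coeff[OF ev that] u0 by (simp add: c_def)
  obtain i where i: "i < N" "u $ i \<noteq> 0"
    using u by (metis carrier_vecD eq_vecI index_zero_vec)
  obtain m where m: "m \<in> {1..N}" "c m \<noteq> 0"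
    using expand[OF i(1)] i(2) by (metis (no_types, lifting) mult_eq_0_iff sum.neutral)
  have x: "x = complex_of_real (nuT N w e m)"
    using c_eq[OF m(1)] m(2) by simp
  have "c k = 0" if "k \<in> {1..N}" "k \<noteq> m" for k
    using c_eq[OF that(1)] nuT_inj[of k N m w e] that m(1) w x by auto
  then have "u $ 0 = c m * complex_of_real (vD N m 1)"
    using expand[of 0] m(1) i(1) by (simp add: sum.remove[of _ m])
  then show False
    using u0 m(2) vD_1_pos[OF m(1)] by simp
qed

lemma secular_root_real:
  fixes p \<nu> :: "nat \<Rightarrow> real" and x :: complex
  assumes "finite K" "k0 \<in> K" "\<forall>k\<in>K. 0 < p k" "x \<noteq> complex_of_real (\<nu> k0)"
    and root: "(\<Sum>k\<in>K. complex_of_real (p k) / (complex_of_real (\<nu> k) - x)) = 1"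
  shows "Im x = 0"
proof -
  have Im_term: "Im (complex_of_real (p k) / (complex_of_real (\<nu> k) - x))
      = Im x * (p k / ((\<nu> k - Re x)\<^sup>2 + (Im x)\<^sup>2))" for k
    by (simp add: Im_divide)
  have "Im x * (\<Sum>k\<in>K. p k / ((\<nu> k - Re x)\<^sup>2 + (Im x)\<^sup>2)) = 0"
    using arg_cong[OF root, of Im] by (simp add: Im_sum Im_term sum_distrib_left)
  moreover have "0 < (\<Sum>k\<in>K. p k / ((\<nu> k - Re x)\<^sup>2 + (Im x)\<^sup>2))"
  proof (rule sum_pos2[OF assms(1,2)])
    have "\<nu> k0 - Re x \<noteq> 0 \<or> Im x \<noteq> 0"
      using assms(4) by (auto simp: complex_eq_iff)
    then have "0 < (\<nu> k0 - Re x)\<^sup>2 + (Im x)\<^sup>2"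
      by (auto simp: add_pos_nonneg add_nonneg_pos)
    then show "0 < p k0 / ((\<nu> k0 - Re x)\<^sup>2 + (Im x)\<^sup>2)"
      using assms(2,3) by simp
  qed (use assms(3) in \<open>auto intro: less_imp_le\<close>)
  ultimately show ?thesis
    by simp
qed

lemma Tom_Pmat_complex_eigenvalue:
  assumes ev: "eigenvector (map_mat complex_of_real (Tom N w e + Pmat N w)) u x"
    and N: "1 \<le> N" and w: "0 < w" "w < 1/4"
  shows "x = complex_of_real (Re x)" "\<forall>k\<in>{1..N}. Re x \<noteq> nuT N w e k"
    "2 * w * secular N w e (Re x) = 1"
proof -
  have u: "u \<in> carrier_vec N"
    using ev unfolding eigenvector_def by auto
  have u0: "u $ 0 \<noteq> 0"
    using Tom_Pmat_eigenvector_nth_0[OF ev] w by simp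
  define nu where "nu k = complex_of_real (nuT N w e k)" for k
  have x_ne: "x \<noteq> nu k" if "k \<in> {1..N}" for k
    using Tom_Pmat_eigenvector_coeff[OF ev that] u0 w vD_1_pos[OF that] by (auto simp: nu_def)
  have coeff: "cvvec N k \<bullet> u = complex_of_real (2 * w * vD N k 1) * u $ 0 / (nu k - x)"
    if "k \<in> {1..N}" for k
    using Tom_Pmat_eigenvector_coeff[OF ev that] x_ne[OF that] by (simp add: nu_def field_simps)
  have "u $ 0 = (\<Sum>k=1..N. complex_of_real (2 * w * vD N k 1) * u $ 0 / (nu k - x) * vD N k 1)"
    using vec_expand_vvec[OF u, of 0] N coeff by simp
  also have "\<dots> = u $ 0 * (\<Sum>k=1..N. complex_of_real (2 * w * (vD N k 1)\<^sup>2) / (nu k - x))"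
    by (simp add: sum_distrib_left power2_eq_square mult_ac)
  finally have root: "(\<Sum>k=1..N. complex_of_real (2 * w * (vD N k 1)\<^sup>2) / (nu k - x)) = 1"
    using u0 by simp
  have "\<forall>k\<in>{1..N}. 0 < 2 * w * (vD N k 1)\<^sup>2"
    using w vD_1_pos[of _ N] by (metis mult_pos_pos zero_less_numeral zero_less_power)
  moreover have "x \<noteq> complex_of_real (nuT N w e 1)"
    using x_ne[of 1] N by (simp add: nu_def)
  ultimately have "Im x = 0"
    using N by (intro secular_root_real[OF _ _ _ _ root[unfolded nu_def], of 1]) auto
  then show x_real: "x = complex_of_real (Re x)"
    by (simp add: complex_eq_iff)
  show "\<forall>k\<in>{1..N}. Re x \<noteq> nuT N w e k"
    using x_ne x_real unfolding nu_def by metis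
  have "complex_of_real (2 * w * secular N w e (Re x)) = 1"
    using root unfolding secular_def sum_distrib_left by (subst (asm) x_real) (simp add: nu_def)
  then show "2 * w * secular N w e (Re x) = 1"
    by (metis of_real_1 of_real_eq_iff)
qed

lemma Tom_Pmat_eigenvalue_secular:
  assumes "eigenvalue (Tom N w e + Pmat N w) x" "1 \<le> N" "0 < w" "w < 1/4"
  shows "\<forall>k\<in>{1..N}. x \<noteq> nuT N w e k" "2 * w * secular N w e x = 1"
proof -
  obtain u where "eigenvector (map_mat complex_of_real (Tom N w e + Pmat N w)) u (complex_of_real x)"
    using of_real_hom.eigenvalue_hom[of _ N, OF _ assms(1)] unfolding eigenvalue_def by auto
  from Tom_Pmat_complex_eigenvalue[OF this assms(2-4)]
  show "\<forall>k\<in>{1..N}. x \<noteq> nuT N w e k" "2 * w * secular N w e x = 1"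
    by simp_all
qed

lemma wvec_carrier [simp]: "wvec N w e x \<in> carrier_vec N"
  by (simp add: wvec_def)

lemma dim_wvec [simp]: "dim_vec (wvec N w e x) = N"
  by (simp add: wvec_def)

lemma sum_vD_1_sq_div_sq_pos:
  assumes "1 \<le> N" "\<forall>k\<in>{1..N}. x \<noteq> nuT N w e k"
  shows "0 < (\<Sum>k=1..N. (vD N k 1)\<^sup>2 / (nuT N w e k - x)\<^sup>2)"
proof (rule sum_pos2[of _ 1])
  have "nuT N w e 1 - x \<noteq> 0"
    using assms by auto
  then show "0 < (vD N 1 1)\<^sup>2 / (nuT N w e 1 - x)\<^sup>2"
    using assms vD_1_pos[of 1 N] by simp
qed (use assms in auto)

lemma wvec_nth_0:
  assumes "1 \<le> N" "0 < w" and root: "2 * w * secular N w e x = 1"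
  shows "wvec N w e x $ 0 = 1 / (2 * w) / sqrt (\<Sum>k=1..N. (vD N k 1)\<^sup>2 / (nuT N w e k - x)\<^sup>2)"
proof -
  have "secular N w e x = 1 / (2 * w)"
    using root assms(2) by (simp add: field_simps)
  then show ?thesis
    using assms(1) by (simp add: wvec_def secular_def power2_eq_square)
qed

lemma wvec_eigenvector:
  assumes N: "1 \<le> N" and w: "0 < w"
    and x_ne: "\<forall>k\<in>{1..N}. x \<noteq> nuT N w e k" and root: "2 * w * secular N w e x = 1"
  shows "eigenvector (Tom N w e + Pmat N w) (wvec N w e x) x"
proof -
  define nu where "nu k = nuT N w e k" for k
  define s where "s = sqrt (\<Sum>k=1..N. (vD N k 1)\<^sup>2 / (nu k - x)\<^sup>2)"
  define b where "b k = vD N k 1 / (nu k - x) / s" for k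
  have s: "0 < s"
    using sum_vD_1_sq_div_sq_pos[OF N x_ne] by (simp add: s_def nu_def)
  have w_eq: "wvec N w e x = vec N (\<lambda>i. \<Sum>k=1..N. b k * vD N k (i + 1))"
    unfolding wvec_def b_def s_def nu_def
    by (intro eq_vecI) (auto simp: sum_divide_distrib intro!: sum.cong)
  have w0: "wvec N w e x $ 0 = 1 / (2 * w) / s"
    using wvec_nth_0[OF N w root] by (simp add: s_def nu_def)
  have Tw: "Tom N w e *\<^sub>v wvec N w e x = vec N (\<lambda>i. \<Sum>k=1..N. b k * nu k * vD N k (i + 1))"
    unfolding w_eq nu_def by (rule mult_vec_sum_vvec[OF Tom_carrier]) (rule Tom_mult_vvec)
  have Pw: "Pmat N w *\<^sub>v wvec N w e x = vec N (\<lambda>i. if i = 0 then - 1 / s else 0)"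
    using Pmat_mult_vec[OF wvec_carrier, of N w w e x] w0 w by (intro eq_vecI) auto
  have "(Tom N w e + Pmat N w) *\<^sub>v wvec N w e x = x \<cdot>\<^sub>v wvec N w e x"
  proof (rule eq_vecI)
    fix i
    assume "i < dim_vec (x \<cdot>\<^sub>v wvec N w e x)"
    then have i: "i < N"
      by simp
    have summand: "b k * nu k * vD N k (i + 1) = x * (b k * vD N k (i + 1)) + vD N k 1 * vD N k (i + 1) / s"
      if "k \<in> {1..N}" for k
    proof -
      have "nu k - x \<noteq> 0"
        using x_ne that by (auto simp: nu_def)
      then show ?thesis
        unfolding b_def using s by (simp add: field_simps)
    qed
    have "((Tom N w e + Pmat N w) *\<^sub>v wvec N w e x) $ i
        = (\<Sum>k=1..N. b k * nu k * vD N k (i + 1)) + (if i = 0 then - 1 / s else 0)"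
      using i by (simp add: add_mult_distrib_mat_vec[OF Tom_carrier Pmat_carrier wvec_carrier] Tw Pw)
    also have "(\<Sum>k=1..N. b k * nu k * vD N k (i + 1))
        = x * (\<Sum>k=1..N. b k * vD N k (i + 1)) + (\<Sum>k=1..N. vD N k 1 * vD N k (i + 1)) / s"
      using summand by (simp add: sum.distrib sum_distrib_left sum_divide_distrib)
    also have "(\<Sum>k=1..N. vD N k 1 * vD N k (i + 1)) = (if i = 0 then 1 else 0)"
      using vD_orthonormal'[of 1 N "i + 1"] N i by auto
    finally show "((Tom N w e + Pmat N w) *\<^sub>v wvec N w e x) $ i = (x \<cdot>\<^sub>v wvec N w e x) $ i"
      using i by (simp add: w_eq)
  qed simp
  moreover have "wvec N w e x \<noteq> 0\<^sub>v N"
  proof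
    assume "wvec N w e x = 0\<^sub>v N"
    then have "wvec N w e x $ 0 = 0"
      using N by simp
    then show False
      using w0 w s by simp
  qed
  ultimately show ?thesis
    unfolding eigenvector_def by simp
qed

section \<open>The first-order block operator\<close>

definition wave_mat :: "nat \<Rightarrow> real mat \<Rightarrow> complex mat" where
  "wave_mat N T = four_block_mat (0\<^sub>m N N) (- 1\<^sub>m N) (map_mat complex_of_real T) (0\<^sub>m N N)"

lemma Amat_eq_wave_mat: "Amat N w e = wave_mat N (Tom N w e)"
  by (simp add: Amat_def wave_mat_def)

lemma Aom_eq_wave_mat: "Aom N w e = wave_mat N (Tom N w e + Pmat N w)"
  by (simp add: Aom_def wave_mat_def)

lemma wave_mat_mult_append:
  assumes T: "T \<in> carrier_mat N N" and a: "a \<in> carrier_vec N" and d: "d \<in> carrier_vec N"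
  shows "wave_mat N T *\<^sub>v (a @\<^sub>v d) = (- d) @\<^sub>v (map_mat complex_of_real T *\<^sub>v a)"
proof -
  have cT: "map_mat complex_of_real T \<in> carrier_mat N N"
    using T by simp
  have "wave_mat N T *\<^sub>v (a @\<^sub>v d)
      = (0\<^sub>m N N *\<^sub>v a + (- 1\<^sub>m N) *\<^sub>v d) @\<^sub>v (map_mat complex_of_real T *\<^sub>v a + 0\<^sub>m N N *\<^sub>v d)"
    unfolding wave_mat_def by (rule four_block_mat_mult_vec[OF _ _ cT _ a d]) auto
  also have "0\<^sub>m N N *\<^sub>v a + (- 1\<^sub>m N) *\<^sub>v d = - d"
    using a d by (intro eq_vecI) (auto simp: scalar_prod_def)
  also have "map_mat complex_of_real T *\<^sub>v a + 0\<^sub>m N N *\<^sub>v d = map_mat complex_of_real T *\<^sub>v a"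
    using a d cT by (intro eq_vecI) (auto simp: scalar_prod_def)
  finally show ?thesis .
qed

lemma smult_append_vec: "c \<cdot>\<^sub>v (a @\<^sub>v d) = (c \<cdot>\<^sub>v a) @\<^sub>v (c \<cdot>\<^sub>v d)"
  by (intro eq_vecI) auto

lemma wave_mat_eigenvector_append:
  assumes T: "T \<in> carrier_mat N N"
    and ev: "eigenvector (map_mat complex_of_real T) v c" and \<mu>: "\<mu> * \<mu> = - c"
  shows "eigenvector (wave_mat N T) (v @\<^sub>v ((- \<mu>) \<cdot>\<^sub>v v)) \<mu>"
proof -
  have v: "v \<in> carrier_vec N" "v \<noteq> 0\<^sub>v N" and Tv: "map_mat complex_of_real T *\<^sub>v v = c \<cdot>\<^sub>v v"
    using ev T unfolding eigenvector_def by auto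
  have "wave_mat N T *\<^sub>v (v @\<^sub>v ((- \<mu>) \<cdot>\<^sub>v v)) = (- ((- \<mu>) \<cdot>\<^sub>v v)) @\<^sub>v (c \<cdot>\<^sub>v v)"
    using wave_mat_mult_append[OF T v(1)] v(1) Tv by simp
  also have "\<dots> = \<mu> \<cdot>\<^sub>v (v @\<^sub>v ((- \<mu>) \<cdot>\<^sub>v v))"
  proof -
    have "- ((- \<mu>) \<cdot>\<^sub>v v) = \<mu> \<cdot>\<^sub>v v"
      by (intro eq_vecI) auto
    moreover have "c \<cdot>\<^sub>v v = \<mu> \<cdot>\<^sub>v ((- \<mu>) \<cdot>\<^sub>v v)"
      using \<mu> by (intro eq_vecI) (auto simp: mult.assoc[symmetric])
    ultimately show ?thesis
      unfolding smult_append_vec by simp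
  qed
  finally have "wave_mat N T *\<^sub>v (v @\<^sub>v ((- \<mu>) \<cdot>\<^sub>v v)) = \<mu> \<cdot>\<^sub>v (v @\<^sub>v ((- \<mu>) \<cdot>\<^sub>v v))" .
  moreover have "v @\<^sub>v ((- \<mu>) \<cdot>\<^sub>v v) \<noteq> 0\<^sub>v (N + N)"
  proof
    assume zero: "v @\<^sub>v ((- \<mu>) \<cdot>\<^sub>v v) = 0\<^sub>v (N + N)"
    have "v = 0\<^sub>v N"
    proof (rule eq_vecI)
      fix i
      assume "i < dim_vec (0\<^sub>v N :: complex vec)"
      then show "v $ i = 0\<^sub>v N $ i"
        using arg_cong[OF zero, of "\<lambda>y. y $ i"] v(1) by simp
    qed (use v(1) in simp)
    then show False
      using v(2) by simp
  qed
  ultimately show ?thesis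
    unfolding eigenvector_def wave_mat_def using v(1) by simp
qed

lemma wave_mat_eigenvectors:
  assumes T: "T \<in> carrier_mat N N" and ev: "eigenvector T u \<nu>" and \<nu>: "0 \<le> \<nu>"
  shows "eigenvector (wave_mat N T) (stackv u (- (\<i> * sqrt \<nu>))) (\<i> * sqrt \<nu>)"
    "eigenvector (wave_mat N T) (stackv u (\<i> * sqrt \<nu>)) (- (\<i> * sqrt \<nu>))"
proof -
  have cev: "eigenvector (map_mat complex_of_real T) (map_vec complex_of_real u) (complex_of_real \<nu>)"
    by (rule of_real_hom.eigenvector_hom[OF T ev])
  have "complex_of_real (sqrt \<nu>) * complex_of_real (sqrt \<nu>) = complex_of_real \<nu>"
    using \<nu> by (simp flip: of_real_mult)
  then have sq: "(\<i> * sqrt \<nu>) * (\<i> * sqrt \<nu>) = - complex_of_real \<nu>"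
    and sq': "(- (\<i> * sqrt \<nu>)) * (- (\<i> * sqrt \<nu>)) = - complex_of_real \<nu>"
    by (simp_all add: algebra_simps)
  show "eigenvector (wave_mat N T) (stackv u (- (\<i> * sqrt \<nu>))) (\<i> * sqrt \<nu>)"
    unfolding stackv_def by (rule wave_mat_eigenvector_append[OF T cev sq])
  show "eigenvector (wave_mat N T) (stackv u (\<i> * sqrt \<nu>)) (- (\<i> * sqrt \<nu>))"
    using wave_mat_eigenvector_append[OF T cev sq'] unfolding stackv_def minus_minus .
qed

lemma wave_mat_eigenvalue:
  assumes T: "T \<in> carrier_mat N N" and ev: "eigenvalue (wave_mat N T) z"
  shows "eigenvalue (map_mat complex_of_real T) (- (z * z))"
proof -
  obtain v where v: "v \<in> carrier_vec (N + N)" "v \<noteq> 0\<^sub>v (N + N)" "wave_mat N T *\<^sub>v v = z \<cdot>\<^sub>v v"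
    using ev unfolding eigenvalue_def eigenvector_def by (auto simp: wave_mat_def)
  define a where "a = vec_first v N"
  define d where "d = vec_last v N"
  have v_eq: "v = a @\<^sub>v d"
    using v(1) by (simp add: a_def d_def)
  have a: "a \<in> carrier_vec N" and d: "d \<in> carrier_vec N"
    by (auto simp: a_def d_def)
  have "(- d) @\<^sub>v (map_mat complex_of_real T *\<^sub>v a) = (z \<cdot>\<^sub>v a) @\<^sub>v (z \<cdot>\<^sub>v d)"
    using v(3) unfolding v_eq wave_mat_mult_append[OF T a d] smult_append_vec .
  then have minus_d: "- d = z \<cdot>\<^sub>v a" and Ta: "map_mat complex_of_real T *\<^sub>v a = z \<cdot>\<^sub>v d"
    using append_vec_eq[of "- d" N "z \<cdot>\<^sub>v a"] a d by auto
  have d_eq: "d = - (z \<cdot>\<^sub>v a)"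
    using arg_cong[OF minus_d, of uminus] by simp
  have "map_mat complex_of_real T *\<^sub>v a = (- (z * z)) \<cdot>\<^sub>v a"
    using Ta a unfolding d_eq by (intro eq_vecI) (auto simp: mult.assoc)
  moreover have "a \<noteq> 0\<^sub>v N"
  proof
    assume "a = 0\<^sub>v N"
    moreover have "- (z \<cdot>\<^sub>v 0\<^sub>v N) = 0\<^sub>v N"
      by (intro eq_vecI) auto
    ultimately have "v = 0\<^sub>v N @\<^sub>v 0\<^sub>v N"
      using v_eq d_eq by simp
    also have "\<dots> = 0\<^sub>v (N + N)"
      by (intro eq_vecI) auto
    finally show False
      using v(2) by simp
  qed
  ultimately show ?thesis
    unfolding eigenvalue_def eigenvector_def using a T by (intro exI[of _ a]) simp
qed

section \<open>An explicit formula for the secular function\<close>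

lemma three_term_summation_by_parts:
  fixes a b :: "nat \<Rightarrow> real"
  assumes "\<And>i. 1 \<le> i \<Longrightarrow> i \<le> n \<Longrightarrow> a (i - 1) + a (i + 1) = \<alpha> * a i"
    and "\<And>i. 1 \<le> i \<Longrightarrow> i \<le> n \<Longrightarrow> b (i - 1) + b (i + 1) = \<beta> * b i"
  shows "(\<alpha> - \<beta>) * (\<Sum>i=1..n. a i * b i) = (a (n + 1) * b n - a n * b (n + 1)) - (a 1 * b 0 - a 0 * b 1)"
  using assms
proof (induction n)
  case 0
  then show ?case by simp
next
  case (Suc n)
  have ra: "a n + a (n + 2) = \<alpha> * a (n + 1)" and rb: "b n + b (n + 2) = \<beta> * b (n + 1)"
    using Suc.prems[of "n + 1"] by simp_all
  have "(\<alpha> - \<beta>) * (a (n + 1) * b (n + 1)) = (\<alpha> * a (n + 1)) * b (n + 1) - a (n + 1) * (\<beta> * b (n + 1))"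
    by (simp add: algebra_simps)
  also have "\<dots> = (a n + a (n + 2)) * b (n + 1) - a (n + 1) * (b n + b (n + 2))"
    by (simp only: ra rb)
  finally have "(\<alpha> - \<beta>) * (a (n + 1) * b (n + 1))
      = (a (n + 2) * b (n + 1) - a (n + 1) * b (n + 2)) - (a (n + 1) * b n - a n * b (n + 1))"
    by (simp add: algebra_simps)
  with Suc show ?case
    by (simp add: distrib_left)
qed

text \<open>The test sequence \<open>u\<^sub>i = sin ((N+1-i)\<phi>) / sin ((N+1)\<phi>)\<close> solves the same three-term recursion
  as the \<open>v\<^sub>k\<close> with eigenvalue \<open>2 - 2 cos \<phi>\<close> and boundary values \<open>u\<^sub>0 = 1\<close>, \<open>u\<^sub>N\<^sub>+\<^sub>1 = 0\<close>; hence
  it is the first column of the resolvent of the Laplacian.\<close>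

lemma sum_vD_1_sq_resolvent:
  assumes N: "1 \<le> N" and sin_ne: "sin ((real N + 1) * \<phi>) \<noteq> 0"
    and ne: "\<forall>k\<in>{1..N}. lamD N k \<noteq> 2 - 2 * cos \<phi>"
  shows "(\<Sum>k=1..N. (vD N k 1)\<^sup>2 / (lamD N k - (2 - 2 * cos \<phi>)))
    = sin (real N * \<phi>) / sin ((real N + 1) * \<phi>)"
proof -
  define M where "M = real N + 1"
  define u where "u i = sin ((M - real i) * \<phi>) / sin (M * \<phi>)" for i :: nat
  define r where "r = 2 - 2 * cos \<phi>"
  have u_rec: "u (i - 1) + u (i + 1) = (2 * cos \<phi>) * u i" if "1 \<le> i" for i
  proof -
    define A where "A = (M - real i) * \<phi>"
    have "(M - real (i - 1)) * \<phi> = A + \<phi>" "(M - real (i + 1)) * \<phi> = A - \<phi>"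
      using that by (simp_all add: A_def of_nat_diff algebra_simps)
    moreover have "sin (A + \<phi>) + sin (A - \<phi>) = (2 * cos \<phi>) * sin A"
      by (simp add: sin_add sin_diff)
    ultimately show ?thesis
      unfolding u_def A_def[symmetric] by (simp add: add_divide_distrib[symmetric])
  qed
  have u0: "u 0 = 1"
    using sin_ne by (simp add: u_def M_def)
  have "u (N + 1) = 0"
    by (simp add: u_def M_def)
  have coeff: "(\<Sum>i=1..N. vD N k i * u i) = vD N k 1 / (lamD N k - r)" if k: "k \<in> {1..N}" for k
  proof -
    have "((2 - lamD N k) - 2 * cos \<phi>) * (\<Sum>i=1..N. vD N k i * u i)
        = (vD N k (N + 1) * u N - vD N k N * u (N + 1)) - (vD N k 1 * u 0 - vD N k 0 * u 1)"
      using vD_three_term u_rec by (rule three_term_summation_by_parts)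
    also have "\<dots> = - vD N k 1"
      using vD_Suc_N[of N k] \<open>u (N + 1) = 0\<close> u0 by simp
    finally have "(lamD N k - r) * (\<Sum>i=1..N. vD N k i * u i) = vD N k 1"
      unfolding r_def by (simp add: algebra_simps)
    moreover have "lamD N k - r \<noteq> 0"
      using ne k unfolding r_def by auto
    ultimately show ?thesis
      by (simp add: field_simps)
  qed
  have "(\<Sum>k=1..N. (vD N k 1)\<^sup>2 / (lamD N k - r)) = (\<Sum>k=1..N. vD N k 1 * (\<Sum>i=1..N. vD N k i * u i))"
    by (rule sum.cong[OF refl]) (simp only: coeff power2_eq_square times_divide_eq_right)
  also have "\<dots> = (\<Sum>i=1..N. u i * (\<Sum>k=1..N. vD N k 1 * vD N k i))"
    by (simp add: sum_distrib_left mult_ac) (rule sum.swap)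
  also have "\<dots> = (\<Sum>i=1..N. if i = 1 then u 1 else 0)"
  proof (intro sum.cong refl)
    fix i
    assume "i \<in> {1..N}"
    then have "(\<Sum>k=1..N. vD N k 1 * vD N k i) = (if 1 = i then 1 else 0)"
      using vD_orthonormal'[of 1 N i] N by simp
    then show "u i * (\<Sum>k=1..N. vD N k 1 * vD N k i) = (if i = 1 then u 1 else 0)"
      by auto
  qed
  also have "\<dots> = u 1"
    using N by simp
  finally show ?thesis
    unfolding r_def by (simp add: u_def M_def)
qed

lemma secular_Tpoly_eq:
  assumes w: "0 < w" "w < 1/4" and r: "0 \<le> r" "r \<le> 4"
    and ne: "\<forall>k\<in>{1..N}. lamD N k \<noteq> r"
  shows "secular N w e (Tpoly w e r)
     = (\<Sum>k=1..N. (vD N k 1)\<^sup>2 / (lamD N k - r)) / (1 + 4 * w - 2 * w * r)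
       + w * (\<Sum>k=1..N. (vD N k 1)\<^sup>2 / ((1 + 4 * w - w * (lamD N k + r)) * (1 + 4 * w - 2 * w * r)))"
proof -
  define Q where "Q = 1 + 4 * w - 2 * w * r"
  have "w * r \<le> w * 4"
    using w r by (intro mult_left_mono) auto
  then have Q: "Q > 0"
    using w unfolding Q_def by linarith
  have summand: "(vD N k 1)\<^sup>2 / (nuT N w e k - Tpoly w e r)
      = (vD N k 1)\<^sup>2 / (lamD N k - r) / Q + w * ((vD N k 1)\<^sup>2 / ((1 + 4 * w - w * (lamD N k + r)) * Q))"
    if k: "k \<in> {1..N}" for k
  proof -
    define l where "l = lamD N k"
    define Q\<^sub>k where "Q\<^sub>k = 1 + 4 * w - w * (l + r)"
    have "1 - 4 * w \<le> Q\<^sub>k"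
      unfolding Q\<^sub>k_def l_def using lamD_bounds r w by (intro Tpoly_slope_bounds) auto
    then have "0 < Q\<^sub>k"
      using w by linarith
    moreover have "l - r \<noteq> 0"
      using ne k unfolding l_def by auto
    ultimately have "(vD N k 1)\<^sup>2 / (l - r) / Q + w * ((vD N k 1)\<^sup>2 / (Q\<^sub>k * Q))
        = (vD N k 1)\<^sup>2 * (Q\<^sub>k + w * (l - r)) / ((l - r) * Q\<^sub>k * Q)"
      using Q by (simp add: field_simps)
    also have "Q\<^sub>k + w * (l - r) = Q"
      unfolding Q_def Q\<^sub>k_def by (simp add: algebra_simps)
    also have "(vD N k 1)\<^sup>2 * Q / ((l - r) * Q\<^sub>k * Q) = (vD N k 1)\<^sup>2 / ((l - r) * Q\<^sub>k)"
      using Q by simp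
    also have "(l - r) * Q\<^sub>k = nuT N w e k - Tpoly w e r"
      unfolding l_def Q\<^sub>k_def by (rule nuT_minus_Tpoly[symmetric])
    finally show ?thesis
      unfolding l_def Q\<^sub>k_def by simp
  qed
  have "secular N w e (Tpoly w e r) = (\<Sum>k=1..N. (vD N k 1)\<^sup>2 / (lamD N k - r) / Q
      + w * ((vD N k 1)\<^sup>2 / ((1 + 4 * w - w * (lamD N k + r)) * Q)))"
    unfolding secular_def by (rule sum.cong[OF refl]) (rule summand)
  then show ?thesis
    unfolding Q_def[symmetric] by (simp only: sum.distrib sum_divide_distrib sum_distrib_left)
qed

lemma secular_remainder_bounds:
  assumes N: "1 \<le> N" and w: "0 < w" "w < 1/4" and r: "0 \<le> r" "r \<le> 4"
  shows "0 \<le> (\<Sum>k=1..N. (vD N k 1)\<^sup>2 / ((1 + 4 * w - w * (lamD N k + r)) * (1 + 4 * w - 2 * w * r)))"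
    and "(\<Sum>k=1..N. (vD N k 1)\<^sup>2 / ((1 + 4 * w - w * (lamD N k + r)) * (1 + 4 * w - 2 * w * r)))
      \<le> 1 / (1 - 4 * w)\<^sup>2"
proof -
  have q: "0 < 1 - 4 * w"
    using w by simp
  have bounds: "0 \<le> (vD N k 1)\<^sup>2 / ((1 + 4 * w - w * (lamD N k + r)) * (1 + 4 * w - 2 * w * r))"
    "(vD N k 1)\<^sup>2 / ((1 + 4 * w - w * (lamD N k + r)) * (1 + 4 * w - 2 * w * r))
      \<le> (vD N k 1)\<^sup>2 / (1 - 4 * w)\<^sup>2" for k
  proof -
    have a: "1 - 4 * w \<le> 1 + 4 * w - w * (lamD N k + r)"
      using lamD_bounds r w by (intro Tpoly_slope_bounds) auto
    have "w * r \<le> w * 4"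
      using w r by (intro mult_left_mono) auto
    then have b: "1 - 4 * w \<le> 1 + 4 * w - 2 * w * r"
      by linarith
    have "(1 - 4 * w)\<^sup>2 \<le> (1 + 4 * w - w * (lamD N k + r)) * (1 + 4 * w - 2 * w * r)"
      unfolding power2_eq_square using a b q by (intro mult_mono) auto
    moreover have "0 < (1 + 4 * w - w * (lamD N k + r)) * (1 + 4 * w - 2 * w * r)"
      using a b q by (intro mult_pos_pos) linarith+
    ultimately show "0 \<le> (vD N k 1)\<^sup>2 / ((1 + 4 * w - w * (lamD N k + r)) * (1 + 4 * w - 2 * w * r))"
      "(vD N k 1)\<^sup>2 / ((1 + 4 * w - w * (lamD N k + r)) * (1 + 4 * w - 2 * w * r))
        \<le> (vD N k 1)\<^sup>2 / (1 - 4 * w)\<^sup>2"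
      using q by (auto intro!: divide_left_mono divide_nonneg_pos)
  qed
  show "0 \<le> (\<Sum>k=1..N. (vD N k 1)\<^sup>2 / ((1 + 4 * w - w * (lamD N k + r)) * (1 + 4 * w - 2 * w * r)))"
    using bounds(1) by (rule sum_nonneg)
  have "(\<Sum>k=1..N. (vD N k 1)\<^sup>2 / ((1 + 4 * w - w * (lamD N k + r)) * (1 + 4 * w - 2 * w * r)))
      \<le> (\<Sum>k=1..N. (vD N k 1)\<^sup>2 / (1 - 4 * w)\<^sup>2)"
    using bounds(2) by (rule sum_mono)
  also have "\<dots> = 1 / (1 - 4 * w)\<^sup>2"
    using sum_vD_1_sq[OF N] by (simp add: sum_divide_distrib[symmetric])
  finally show "(\<Sum>k=1..N. (vD N k 1)\<^sup>2 / ((1 + 4 * w - w * (lamD N k + r)) * (1 + 4 * w - 2 * w * r)))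
      \<le> 1 / (1 - 4 * w)\<^sup>2" .
qed

lemma shifted_angle_bounds:
  fixes N j :: nat and s :: real
  defines "M \<equiv> real N + 1"
  defines "\<theta> \<equiv> real j * pi / M"
  assumes j: "j \<in> {1..N}" and s: "0 < s" "s \<le> pi / (2 * M)"
  shows "lamD N (j - 1) < 2 - 2 * cos (\<theta> - s)" "2 - 2 * cos (\<theta> - s) < lamD N j"
    "0 < \<theta> - s" "\<theta> - s < pi"
proof -
  have M: "M > 0"
    by (simp add: M_def)
  have \<theta>_le: "\<theta> \<le> pi"
    using angle_less_pi[of j N] j unfolding \<theta>_def M_def by auto
  have \<theta>_prev: "real (j - 1) * pi / M = \<theta> - pi / M"
    using j unfolding \<theta>_def by (simp add: of_nat_diff diff_divide_distrib left_diff_distrib)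
  have "0 < M * s" "M * s * 2 \<le> pi"
    using s M by (simp_all add: field_simps)
  then have s_lt: "s < pi / M"
    using M by (simp add: field_simps)
  have "pi / M \<le> \<theta>"
    using j M unfolding \<theta>_def by (intro divide_right_mono) auto
  then show pos: "0 < \<theta> - s"
    using s_lt by linarith
  show lt_pi: "\<theta> - s < pi"
    using \<theta>_le s by linarith
  have "cos \<theta> < cos (\<theta> - s)"
    using \<theta>_le s pos by (subst cos_mono_less_eq) auto
  then show "2 - 2 * cos (\<theta> - s) < lamD N j"
    unfolding lamD_eq_cos M_def[symmetric] \<theta>_def[symmetric] by simp
  have "cos (\<theta> - s) < cos (\<theta> - pi / M)"
    using \<open>pi / M \<le> \<theta>\<close> \<theta>_le s s_lt lt_pi by (subst cos_mono_less_eq) auto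
  then show "lamD N (j - 1) < 2 - 2 * cos (\<theta> - s)"
    unfolding lamD_eq_cos M_def[symmetric] \<theta>_prev by simp
qed

lemma shifted_angle_ne_lamD:
  fixes N j :: nat and s :: real
  defines "M \<equiv> real N + 1"
  defines "\<theta> \<equiv> real j * pi / M"
  assumes j: "j \<in> {1..N}" and s: "0 < s" "s \<le> pi / (2 * M)" and k: "k \<in> {1..N}"
  shows "lamD N k \<noteq> 2 - 2 * cos (\<theta> - s)"
proof (cases "k < j")
  case True
  then show ?thesis
    using shifted_angle_bounds(1)[OF j s[unfolded M_def]] lamD_mono[of k "j - 1" N] j
    unfolding \<theta>_def M_def by fastforce
next
  case False
  then show ?thesis
    using shifted_angle_bounds(2)[OF j s[unfolded M_def]] lamD_mono[of j k N] k
    unfolding \<theta>_def M_def by fastforce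
qed

text \<open>At \<open>\<phi> = \<theta>\<^sub>j - s\<close> we have \<open>(N+1)\<phi> = j\<pi> - (N+1)s\<close>, which turns the quotient of the resolvent
  formula into a cotangent of the small angle \<open>(N+1)s\<close>.\<close>

lemma resolvent_at_shifted_angle:
  fixes N j :: nat and s :: real
  defines "M \<equiv> real N + 1"
  defines "\<theta> \<equiv> real j * pi / M"
  assumes s: "0 < s" "s \<le> pi / (2 * M)"
  shows "sin (M * (\<theta> - s)) \<noteq> 0"
    "sin (real N * (\<theta> - s)) / sin (M * (\<theta> - s)) = cos (\<theta> - s) + sin (\<theta> - s) * cos (M * s) / sin (M * s)"
proof -
  have M: "M > 0"
    by (simp add: M_def)
  have M\<theta>: "M * (\<theta> - s) = real j * pi - M * s"
    unfolding \<theta>_def using M by (simp add: field_simps)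
  have "0 < M * s" "M * s * 2 \<le> pi"
    using s M by (simp_all add: field_simps)
  then have "0 < M * s" "M * s < pi"
    by linarith+
  then have sin_Ms: "sin (M * s) > 0"
    by (rule sin_gt_zero)
  have sin_M: "sin (M * (\<theta> - s)) = - ((-1)^j * sin (M * s))"
    unfolding M\<theta> by (simp add: sin_diff)
  have cos_M: "cos (M * (\<theta> - s)) = (-1)^j * cos (M * s)"
    unfolding M\<theta> by (simp add: cos_diff)
  show sin_ne: "sin (M * (\<theta> - s)) \<noteq> 0"
    unfolding sin_M using sin_Ms by simp
  have "real N * (\<theta> - s) = M * (\<theta> - s) - (\<theta> - s)"
    by (simp add: M_def algebra_simps)
  then have "sin (real N * (\<theta> - s))
      = sin (M * (\<theta> - s)) * cos (\<theta> - s) - cos (M * (\<theta> - s)) * sin (\<theta> - s)"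
    by (simp add: sin_diff)
  then have "sin (real N * (\<theta> - s)) / sin (M * (\<theta> - s))
      = cos (\<theta> - s) - sin (\<theta> - s) * (cos (M * (\<theta> - s)) / sin (M * (\<theta> - s)))"
    using sin_ne by (simp add: field_simps)
  also have "cos (M * (\<theta> - s)) / sin (M * (\<theta> - s)) = - (cos (M * s) / sin (M * s))"
    unfolding sin_M cos_M by (simp add: minus_one_power_iff)
  finally show "sin (real N * (\<theta> - s)) / sin (M * (\<theta> - s))
      = cos (\<theta> - s) + sin (\<theta> - s) * cos (M * s) / sin (M * s)"
    by simp
qed

lemma secular_at_shifted_angle:
  fixes N j :: nat and s w e :: real
  defines "M \<equiv> real N + 1"
  defines "\<theta> \<equiv> real j * pi / M"
  assumes j: "j \<in> {1..N}" and s: "0 < s" "s \<le> pi / (2 * M)" and w: "0 < w" "w < 1/4"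
  obtains E Q where
    "secular N w e (Tpoly w e (2 - 2 * cos (\<theta> - s)))
      = (cos (\<theta> - s) + sin (\<theta> - s) * cos (M * s) / sin (M * s)) / Q + w * E"
    "0 \<le> E" "E \<le> 1 / (1 - 4 * w)\<^sup>2" "1 - 4 * w \<le> Q" "Q \<le> 1 + 4 * w"
proof -
  define r where "r = 2 - 2 * cos (\<theta> - s)"
  define Q where "Q = 1 + 4 * w - 2 * w * r"
  define E where "E = (\<Sum>k=1..N. (vD N k 1)\<^sup>2 / ((1 + 4 * w - w * (lamD N k + r)) * Q))"
  note bounds = shifted_angle_bounds[OF j s[unfolded M_def]]
  have N: "1 \<le> N"
    using j by simp
  have r: "0 \<le> r" "r \<le> 4"
    using bounds(1,2) lamD_bounds[of N "j - 1"] lamD_bounds[of N j] unfolding r_def \<theta>_def M_def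
    by linarith+
  have ne: "\<forall>k\<in>{1..N}. lamD N k \<noteq> r"
    using shifted_angle_ne_lamD[OF j s[unfolded M_def]] unfolding r_def \<theta>_def M_def by blast
  have "(\<Sum>k=1..N. (vD N k 1)\<^sup>2 / (lamD N k - r)) = sin (real N * (\<theta> - s)) / sin (M * (\<theta> - s))"
    using sum_vD_1_sq_resolvent[OF N _ ne[unfolded r_def]] resolvent_at_shifted_angle(1)[OF s[unfolded M_def], of j]
    unfolding r_def M_def \<theta>_def by simp
  also have "\<dots> = cos (\<theta> - s) + sin (\<theta> - s) * cos (M * s) / sin (M * s)"
    unfolding M_def \<theta>_def by (rule resolvent_at_shifted_angle(2)[OF s[unfolded M_def]])
  finally have "secular N w e (Tpoly w e r)
      = (cos (\<theta> - s) + sin (\<theta> - s) * cos (M * s) / sin (M * s)) / Q + w * E"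
    using secular_Tpoly_eq[OF w r ne, of e] unfolding Q_def E_def by simp
  moreover have "0 \<le> w * r" "w * r \<le> w * 4"
    using w r by (auto intro: mult_left_mono)
  ultimately show ?thesis
    using that[of Q E] secular_remainder_bounds[OF N w r] unfolding r_def Q_def E_def by simp
qed

section \<open>Locating the perturbed eigenvalues\<close>

lemma vD_1_sq_eq:
  "(vD N j 1)\<^sup>2 = 2 / (real N + 1) * (sin (real j * pi / (real N + 1)))\<^sup>2"
  by (simp add: vD_def power_mult_distrib)

lemma sin_angle_pos:
  assumes "j \<in> {1..N}"
  shows "0 < sin (real j * pi / (real N + 1))"
  using vD_1_pos[OF assms] by (simp add: vD_def zero_less_mult_iff)

lemma low_end_numeric:
  fixes w :: real
  assumes "0 < w" "w \<le> 1/50"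
  shows "1 + 4 * w \<le> 2 * w * (-1 + (1 - 6 * w) * (1 - w\<^sup>2 / 2) / w)"
proof -
  have "2 * w * (-1 + (1 - 6 * w) * (1 - w\<^sup>2 / 2) / w) = 2 - 14 * w - w\<^sup>2 + 6 * w ^ 3"
    using assms by (simp add: field_simps power2_eq_square power3_eq_cube)
  moreover have "w\<^sup>2 \<le> w / 50" "0 \<le> w ^ 3"
    using assms by (simp_all add: power2_eq_square mult_left_le)
  ultimately show ?thesis
    using assms by linarith
qed

lemma high_end_numeric:
  fixes w :: real
  assumes "0 < w" "w \<le> 1/50"
  shows "2 * w * (1 + (1 + 4 * w) / (4 * w)) / (1 - 4 * w) + 2 * w\<^sup>2 / (1 - 4 * w)\<^sup>2 \<le> 1"
proof -
  have q: "0 < 1 - 4 * w"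
    using assms by simp
  have "2 * w * (1 + (1 + 4 * w) / (4 * w)) = 1/2 + 4 * w"
    using assms by (simp add: field_simps)
  moreover have "A / q + B / q\<^sup>2 = (A * q + B) / q\<^sup>2" if "q \<noteq> 0" for A B q :: real
    using that by (simp add: field_simps power2_eq_square)
  ultimately have "2 * w * (1 + (1 + 4 * w) / (4 * w)) / (1 - 4 * w) + 2 * w\<^sup>2 / (1 - 4 * w)\<^sup>2
      = ((1/2 + 4 * w) * (1 - 4 * w) + 2 * w\<^sup>2) / (1 - 4 * w)\<^sup>2"
    using q by simp
  also have "\<dots> \<le> 1"
  proof -
    have "(1 - 4 * w)\<^sup>2 - ((1/2 + 4 * w) * (1 - 4 * w) + 2 * w\<^sup>2) = 1/2 - 10 * w + 30 * w\<^sup>2"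
      by (simp add: algebra_simps power2_eq_square)
    moreover have "0 \<le> 30 * w\<^sup>2"
      by simp
    ultimately have "(1/2 + 4 * w) * (1 - 4 * w) + 2 * w\<^sup>2 \<le> (1 - 4 * w)\<^sup>2"
      using assms by linarith
    then show ?thesis
      using q by simp
  qed
  finally show ?thesis .
qed

lemma small_shift_bounds:
  fixes M y w :: real
  assumes M: "1 \<le> M" and y: "0 < y" "y \<le> 4 * w" and w: "w \<le> 1/50"
  shows "0 < y / M" "y / M \<le> y" "y / M \<le> pi / (2 * M)"
proof -
  show "0 < y / M"
    using y M by simp
  show "y / M \<le> y"
    using divide_left_mono[of 1 M y] y M by simp
  have "y \<le> pi / 2"
    using y w pi_ge_two by linarith
  then show "y / M \<le> pi / (2 * M)"
    using divide_right_mono[of y "pi / 2" M] M by simp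
qed

lemma cot_term_lower:
  fixes \<theta> s w :: real
  assumes sin_\<theta>: "0 < sin \<theta>" "sin \<theta> \<le> 1" and w: "0 < w" "w \<le> 1/50"
    and s: "0 < s" "s \<le> w * sin \<theta>"
  shows "(1 - 6 * w) * (1 - w\<^sup>2 / 2) / w \<le> sin (\<theta> - s) * (cos (w * sin \<theta>) / sin (w * sin \<theta>))"
proof -
  define y where "y = w * sin \<theta>"
  have y: "0 < y" "y \<le> w"
    using scaled_sin_bounds[OF w(1) sin_\<theta>(1)] unfolding y_def by simp_all
  have "s \<le> 4 * w * sin \<theta>" "s \<le> 1"
    using s y w unfolding y_def by linarith+
  then have sin_shift: "sin \<theta> * (1 - 6 * w) \<le> sin (\<theta> - s)"
    using sin_shift_bounds(1)[of \<theta> s w] sin_\<theta> s by simp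
  moreover have "0 \<le> sin \<theta> * (1 - 6 * w)"
    using sin_\<theta> w by simp
  ultimately have "0 \<le> sin (\<theta> - s)"
    by linarith
  have "(1 - w\<^sup>2 / 2) / y \<le> (1 - y\<^sup>2 / 2) / y"
    using y power_mono[of y w 2] by (intro divide_right_mono) auto
  also have "\<dots> \<le> cos y / sin y"
    using y w by (intro cot_bounds) auto
  finally have cot: "(1 - w\<^sup>2 / 2) / y \<le> cos y / sin y" .
  have "(1 - 6 * w) * (1 - w\<^sup>2 / 2) / w = (sin \<theta> * (1 - 6 * w)) * ((1 - w\<^sup>2 / 2) / y)"
    using sin_\<theta> w unfolding y_def by (simp add: field_simps)
  also have "\<dots> \<le> sin (\<theta> - s) * (cos y / sin y)"
    using sin_shift \<open>0 \<le> sin (\<theta> - s)\<close> cot sin_\<theta> w y power_le_one[of w 2] by (intro mult_mono) auto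
  finally show ?thesis
    unfolding y_def .
qed

lemma cot_term_upper:
  fixes \<theta> s w :: real
  assumes sin_\<theta>: "0 < sin \<theta>" "sin \<theta> \<le> 1" and w: "0 < w" "w \<le> 1/50"
    and s: "0 < s" "s \<le> 4 * w * sin \<theta>"
  shows "sin (\<theta> - s) * (cos (4 * w * sin \<theta>) / sin (4 * w * sin \<theta>)) \<le> (1 + 4 * w) / (4 * w)"
proof -
  define y where "y = 4 * w * sin \<theta>"
  have w4pos: "0 < 4 * w"
    using w by simp
  have y: "0 < y" "y \<le> 1"
    using scaled_sin_bounds[OF w4pos sin_\<theta>(1)] w unfolding y_def by argo+
  have s_le: "s \<le> 1"
    using s y unfolding y_def by linarith
  have "sin \<theta> * (1 - 6 * w) \<le> sin (\<theta> - s)" "0 \<le> sin \<theta> * (1 - 6 * w)"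
    using sin_shift_bounds(1)[OF _ _ s(2) s_le] sin_\<theta> s w by simp_all
  then have "0 \<le> sin (\<theta> - s)"
    by linarith
  moreover have "0 \<le> cos y / sin y"
  proof -
    have "0 \<le> (1 - y\<^sup>2 / 2) / y"
      using y power_le_one[of y 2] by simp
    then show ?thesis
      using cot_bounds(1)[OF y] by simp
  qed
  ultimately have "sin (\<theta> - s) * (cos y / sin y) \<le> sin \<theta> * (1 + 4 * w) * (1 / y)"
    using sin_shift_bounds(2)[OF _ _ s(2) s_le] cot_bounds(2)[OF y] sin_\<theta> s by (intro mult_mono) auto
  also have "\<dots> = (1 + 4 * w) / (4 * w)"
    unfolding y_def using sin_\<theta> w by (simp add: field_simps)
  finally show ?thesis
    unfolding y_def .
qed

lemma secular_low_end:
  fixes N j :: nat and w e :: real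
  defines "M \<equiv> real N + 1"
  defines "\<theta> \<equiv> real j * pi / M"
  defines "s \<equiv> w * sin \<theta> / M"
  assumes j: "j \<in> {1..N}" and w: "0 < w" "w \<le> 1/50"
  shows "1 \<le> 2 * w * secular N w e (Tpoly w e (2 - 2 * cos (\<theta> - s)))"
proof -
  have M: "1 \<le> M"
    by (simp add: M_def)
  have w4: "w < 1/4"
    using w by simp
  have sin_\<theta>: "0 < sin \<theta>" "sin \<theta> \<le> 1"
    using sin_angle_pos[OF j] unfolding \<theta>_def M_def by auto
  have "0 < w * sin \<theta>" "w * sin \<theta> \<le> 4 * w"
    using scaled_sin_bounds[OF w(1) sin_\<theta>(1)] w by linarith+
  note s = small_shift_bounds[OF M this w(2), folded s_def]
  have Ms: "M * s = w * sin \<theta>"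
    unfolding s_def using M by simp
  obtain E Q where F: "secular N w e (Tpoly w e (2 - 2 * cos (\<theta> - s)))
      = (cos (\<theta> - s) + sin (\<theta> - s) * cos (w * sin \<theta>) / sin (w * sin \<theta>)) / Q + w * E"
    and E: "0 \<le> E" and Q: "1 - 4 * w \<le> Q" "Q \<le> 1 + 4 * w"
    using secular_at_shifted_angle[OF j s(1)[unfolded M_def] s(3)[unfolded M_def] w(1) w4, of e]
    unfolding M_def[symmetric] \<theta>_def[symmetric] Ms by blast
  define G where "G = cos (\<theta> - s) + sin (\<theta> - s) * cos (w * sin \<theta>) / sin (w * sin \<theta>)"
  have "-1 + (1 - 6 * w) * (1 - w\<^sup>2 / 2) / w \<le> G"
    using cot_term_lower[OF sin_\<theta> w s(1,2)] cos_ge_minus_one[of "\<theta> - s"]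
    unfolding G_def by (simp only: times_divide_eq_right)
  then have "2 * w * (-1 + (1 - 6 * w) * (1 - w\<^sup>2 / 2) / w) \<le> 2 * w * G"
    using w by (intro mult_left_mono) auto
  then have "1 + 4 * w \<le> 2 * w * G"
    using low_end_numeric[OF w] by linarith
  then have "1 \<le> 2 * w * G / Q"
    using Q w by (simp add: le_divide_eq)
  also have "\<dots> \<le> 2 * w * (G / Q + w * E)"
    using E w by (simp add: distrib_left)
  finally show ?thesis
    unfolding F G_def .
qed

lemma secular_high_end:
  fixes N j :: nat and w e :: real
  defines "M \<equiv> real N + 1"
  defines "\<theta> \<equiv> real j * pi / M"
  defines "s \<equiv> 4 * w * sin \<theta> / M"
  assumes j: "j \<in> {1..N}" and w: "0 < w" "w \<le> 1/50"
  shows "2 * w * secular N w e (Tpoly w e (2 - 2 * cos (\<theta> - s))) \<le> 1"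
proof -
  have M: "1 \<le> M"
    by (simp add: M_def)
  have w4: "w < 1/4"
    using w by simp
  have sin_\<theta>: "0 < sin \<theta>" "sin \<theta> \<le> 1"
    using sin_angle_pos[OF j] unfolding \<theta>_def M_def by auto
  have w4pos: "0 < 4 * w"
    using w by simp
  have "0 < 4 * w * sin \<theta>" "4 * w * sin \<theta> \<le> 4 * w"
    using scaled_sin_bounds[OF w4pos sin_\<theta>(1)] by simp_all
  note s = small_shift_bounds[OF M this w(2), folded s_def]
  have Ms: "M * s = 4 * w * sin \<theta>"
    unfolding s_def using M by simp
  obtain E Q where F: "secular N w e (Tpoly w e (2 - 2 * cos (\<theta> - s)))
      = (cos (\<theta> - s) + sin (\<theta> - s) * cos (4 * w * sin \<theta>) / sin (4 * w * sin \<theta>)) / Q + w * E"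
    and E: "E \<le> 1 / (1 - 4 * w)\<^sup>2" and Q: "1 - 4 * w \<le> Q"
    using secular_at_shifted_angle[OF j s(1)[unfolded M_def] s(3)[unfolded M_def] w(1) w4, of e]
    unfolding M_def[symmetric] \<theta>_def[symmetric] Ms by blast
  define G where "G = cos (\<theta> - s) + sin (\<theta> - s) * cos (4 * w * sin \<theta>) / sin (4 * w * sin \<theta>)"
  define G\<^sub>0 where "G\<^sub>0 = 1 + (1 + 4 * w) / (4 * w)"
  have G: "G \<le> G\<^sub>0"
    using cot_term_upper[OF sin_\<theta> w s(1,2)] cos_le_one[of "\<theta> - s"]
    unfolding G_def G\<^sub>0_def by (simp only: times_divide_eq_right)
  have q: "0 < 1 - 4 * w"
    using w by simp
  have "0 < G\<^sub>0"
    using w unfolding G\<^sub>0_def by (simp add: add_pos_pos)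
  have "G / Q \<le> G\<^sub>0 / (1 - 4 * w)"
    using \<open>0 < G\<^sub>0\<close> G q Q by (intro frac_le) auto
  then have "2 * w * (G / Q) \<le> 2 * w * (G\<^sub>0 / (1 - 4 * w))"
    using w by (intro mult_left_mono) auto
  moreover have "2 * w * (w * E) \<le> 2 * w\<^sup>2 * (1 / (1 - 4 * w)\<^sup>2)"
    using mult_left_mono[OF E, of "2 * w\<^sup>2"] w by (simp add: power2_eq_square mult_ac)
  ultimately have "2 * w * (G / Q + w * E) \<le> 2 * w * G\<^sub>0 / (1 - 4 * w) + 2 * w\<^sup>2 / (1 - 4 * w)\<^sup>2"
    by (simp add: distrib_left)
  also have "\<dots> \<le> 1"
    unfolding G\<^sub>0_def by (rule high_end_numeric[OF w])
  finally show ?thesis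
    unfolding F G_def .
qed

lemma cos_shift_diff_bounds:
  fixes \<theta> s w :: real
  assumes sin_\<theta>: "0 < sin \<theta>" "sin \<theta> \<le> 1" and s: "0 < s" "s \<le> 4 * w * sin \<theta>"
    and w: "0 < w" "w \<le> 1/50"
  shows "191/100 * (sin \<theta> * s) \<le> 2 * cos (\<theta> - s) - 2 * cos \<theta>"
    "2 * cos (\<theta> - s) - 2 * cos \<theta> \<le> (2 + 4 * w) * (sin \<theta> * s)"
proof -
  define P where "P = sin \<theta> * s"
  have P: "0 \<le> P"
    using sin_\<theta> s by (simp add: P_def)
  have L: "2 * cos (\<theta> - s) - 2 * cos \<theta> = 2 * sin \<theta> * sin s - 2 * cos \<theta> * (1 - cos s)"
    by (simp add: cos_diff algebra_simps)
  have "4 * w * sin \<theta> \<le> 4 * w * 1"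
    using w sin_\<theta> by (intro mult_left_mono) auto
  then have s_le: "s \<le> 4 * w"
    using s by linarith
  have ss: "s * s \<le> 4 * w * P"
    using s by (simp add: P_def mult_right_mono mult_ac)
  have "s * s \<le> (4 * w) * (4 * w)"
    using s_le s by (intro mult_mono) auto
  also have "\<dots> \<le> (2/25) * (2/25)"
    using w by (intro mult_mono) auto
  also have "\<dots> \<le> 1/100"
    by simp
  finally have ss_small: "s * s \<le> 1/100" .
  have sin_s: "s * (1 - s * s / 2) \<le> sin s" "sin s \<le> s"
    using sin_ge_cubic[of s] s_le w pi_ge_two s sin_x_le_x[of s] by auto
  have cos_term: "2 * cos \<theta> * (1 - cos s) \<le> s * s" "- (2 * cos \<theta> * (1 - cos s)) \<le> s * s"
    using abs_cos_mult_versine_le[of \<theta> s] by (auto simp: abs_le_iff)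
  have "2 * sin \<theta> * sin s \<le> 2 * P"
    using sin_s(2) sin_\<theta> by (simp add: P_def)
  then show "2 * cos (\<theta> - s) - 2 * cos \<theta> \<le> (2 + 4 * w) * (sin \<theta> * s)"
    unfolding L P_def[symmetric] using cos_term(2) ss by (simp add: algebra_simps)
  have "2 * P - P * (s * s) \<le> 2 * sin \<theta> * sin s"
    using mult_left_mono[OF sin_s(1), of "2 * sin \<theta>"] sin_\<theta> by (simp add: P_def algebra_simps)
  moreover have "P * (s * s) \<le> P * (1/100)"
    using ss_small P by (intro mult_left_mono) auto
  moreover have "4 * w * P \<le> 8/100 * P"
    using w P by (intro mult_right_mono) auto
  ultimately show "191/100 * (sin \<theta> * s) \<le> 2 * cos (\<theta> - s) - 2 * cos \<theta>"
    unfolding L P_def[symmetric] using cos_term(1) ss by linarith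
qed

lemma shift_product_bounds:
  fixes N j :: nat and s w :: real
  defines "M \<equiv> real N + 1"
  defines "\<theta> \<equiv> real j * pi / M"
  assumes j: "j \<in> {1..N}" and s: "w * sin \<theta> / M \<le> s" "s \<le> 4 * w * sin \<theta> / M"
  shows "w * (vD N j 1)\<^sup>2 / 2 \<le> sin \<theta> * s" "sin \<theta> * s \<le> 2 * w * (vD N j 1)\<^sup>2"
proof -
  have M: "1 \<le> M"
    by (simp add: M_def)
  have sin_\<theta>: "0 < sin \<theta>"
    using sin_angle_pos[OF j] unfolding \<theta>_def M_def by auto
  have a_j: "(vD N j 1)\<^sup>2 = 2 / M * (sin \<theta>)\<^sup>2"
    unfolding vD_1_sq_eq M_def \<theta>_def ..
  show "w * (vD N j 1)\<^sup>2 / 2 \<le> sin \<theta> * s"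
    using mult_left_mono[OF s(1), of "sin \<theta>"] sin_\<theta> M unfolding a_j
    by (simp add: field_simps power2_eq_square)
  show "sin \<theta> * s \<le> 2 * w * (vD N j 1)\<^sup>2"
    using mult_left_mono[OF s(2), of "sin \<theta>"] sin_\<theta> M unfolding a_j
    by (simp add: field_simps power2_eq_square)
qed

lemma gap_bounds:
  fixes N j :: nat and s w e :: real
  defines "M \<equiv> real N + 1"
  defines "\<theta> \<equiv> real j * pi / M"
  assumes j: "j \<in> {1..N}" and w: "0 < w" "w \<le> 1/50"
    and s: "w * sin \<theta> / M \<le> s" "s \<le> 4 * w * sin \<theta> / M"
  shows "w * (vD N j 1)\<^sup>2 / 2 \<le> nuT N w e j - Tpoly w e (2 - 2 * cos (\<theta> - s))"
    "nuT N w e j - Tpoly w e (2 - 2 * cos (\<theta> - s)) \<le> 5 * w * (vD N j 1)\<^sup>2"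
proof -
  define r where "r = 2 - 2 * cos (\<theta> - s)"
  define P where "P = sin \<theta> * s"
  define Q where "Q = 1 + 4 * w - w * (lamD N j + r)"
  have M: "1 \<le> M"
    by (simp add: M_def)
  have sin_\<theta>: "0 < sin \<theta>" "sin \<theta> \<le> 1"
    using sin_angle_pos[OF j] unfolding \<theta>_def M_def by auto
  have "0 < w * sin \<theta> / M"
    using w sin_\<theta> M by simp
  then have s_pos: "0 < s"
    using s(1) by linarith
  have "4 * w * sin \<theta> / M \<le> 4 * w * sin \<theta> / 1"
    using w sin_\<theta> M by (intro divide_left_mono) auto
  then have "s \<le> 4 * w * sin \<theta>"
    using s(2) by simp
  note L = cos_shift_diff_bounds[OF sin_\<theta> s_pos this w]
  have P_lo: "w * (vD N j 1)\<^sup>2 / 2 \<le> P" and P_hi: "P \<le> 2 * w * (vD N j 1)\<^sup>2"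
    using shift_product_bounds[OF j s[unfolded M_def \<theta>_def]] unfolding P_def \<theta>_def M_def by simp_all
  have lam_r: "lamD N j - r = 2 * cos (\<theta> - s) - 2 * cos \<theta>"
    unfolding r_def lamD_eq_cos M_def[symmetric] \<theta>_def[symmetric] by simp
  have r: "0 \<le> r" "r \<le> 4"
    using cos_le_one[of "\<theta> - s"] cos_ge_minus_one[of "\<theta> - s"] unfolding r_def by linarith+
  have Q: "1 - 4 * w \<le> Q" "Q \<le> 1 + 4 * w"
    unfolding Q_def using lamD_bounds r w by (intro Tpoly_slope_bounds; simp)+
  have gap: "nuT N w e j - Tpoly w e r = (lamD N j - r) * Q"
    unfolding Q_def by (rule nuT_minus_Tpoly)
  have P: "0 \<le> P"
    using sin_\<theta> s_pos by (simp add: P_def)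
  have "P * 1 \<le> P * (191/100 * (1 - 4 * w))"
    using w P by (intro mult_left_mono) auto
  then have "P \<le> 191/100 * P * (1 - 4 * w)"
    by (simp add: mult_ac)
  also have "\<dots> \<le> (lamD N j - r) * Q"
    using L(1) Q w P unfolding lam_r P_def by (intro mult_mono) auto
  finally show "w * (vD N j 1)\<^sup>2 / 2 \<le> nuT N w e j - Tpoly w e (2 - 2 * cos (\<theta> - s))"
    using P_lo gap unfolding r_def by linarith
  have "0 \<le> (2 + 4 * w) * P" "0 \<le> Q"
    using P w Q by simp_all
  then have "(lamD N j - r) * Q \<le> (2 + 4 * w) * P * (1 + 4 * w)"
    using L(2) Q(2) unfolding lam_r P_def by (intro mult_mono) auto
  also have "\<dots> = ((2 + 4 * w) * (1 + 4 * w)) * P"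
    by (simp add: mult_ac)
  also have "\<dots> \<le> 5/2 * P"
  proof (rule mult_right_mono[OF _ P])
    have "(2 + 4 * w) * (1 + 4 * w) \<le> (2 + 4 / 50) * (1 + 4 / 50)"
      using w by (intro mult_mono) auto
    then show "(2 + 4 * w) * (1 + 4 * w) \<le> 5/2"
      by simp
  qed
  finally show "nuT N w e j - Tpoly w e (2 - 2 * cos (\<theta> - s)) \<le> 5 * w * (vD N j 1)\<^sup>2"
    using P_hi gap unfolding r_def by linarith
qed

lemma Tpoly_diff_sq_ge:
  assumes r: "0 \<le> r" "r \<le> 4" and w: "0 < w" "w \<le> 1/50"
  shows "(lamD N k - r)\<^sup>2 / 2 \<le> (nuT N w e k - Tpoly w e r)\<^sup>2"
proof -
  define Q where "Q = 1 + 4 * w - w * (lamD N k + r)"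
  have "1 - 4 * w \<le> Q"
    unfolding Q_def using lamD_bounds r w by (intro Tpoly_slope_bounds) auto
  then have "9/10 \<le> Q"
    using w by linarith
  then have "(9/10)\<^sup>2 \<le> Q\<^sup>2"
    by (intro power_mono) auto
  then have "(lamD N k - r)\<^sup>2 * (1/2) \<le> (lamD N k - r)\<^sup>2 * Q\<^sup>2"
    by (intro mult_left_mono) (auto simp: power2_eq_square)
  moreover have "nuT N w e k - Tpoly w e r = (lamD N k - r) * Q"
    unfolding Q_def by (rule nuT_minus_Tpoly)
  ultimately show ?thesis
    by (simp add: power_mult_distrib)
qed

lemma abs_half_shifted_gap_ge:
  fixes d p s :: real
  assumes d: "1 \<le> \<bar>d\<bar>" and p: "0 < p" and s: "0 < s" "s \<le> p / 2"
  shows "\<bar>d\<bar> * p / 4 \<le> \<bar>(d * p + s) / 2\<bar>"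
proof (cases "0 < d")
  case True
  then show ?thesis
    using p s by (simp add: field_simps)
next
  case False
  then have "d * p + s = - (\<bar>d\<bar> * p - s)"
    by simp
  moreover have "p \<le> \<bar>d\<bar> * p"
    using mult_right_mono[OF d, of p] p by simp
  moreover have "0 \<le> \<bar>d\<bar> * p - s"
    using \<open>p \<le> \<bar>d\<bar> * p\<close> s by argo
  ultimately have "\<bar>(d * p + s) / 2\<bar> = (\<bar>d\<bar> * p - s) / 2"
    by simp
  moreover have "\<bar>d\<bar> * p / 4 \<le> (\<bar>d\<bar> * p - s) / 2"
    using \<open>p \<le> \<bar>d\<bar> * p\<close> s by argo
  ultimately show ?thesis
    by simp
qed

lemma sin_half_gap_sq_ge:
  fixes N j k :: nat and s :: real
  defines "M \<equiv> real N + 1"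
  assumes jk: "k \<noteq> j" and s: "0 < s" "s \<le> pi / (2 * M)"
    and angles: "0 < real k * pi / M" "real k * pi / M < pi" "0 < real j * pi / M - s" "real j * pi / M - s < pi"
  shows "(real k - real j)\<^sup>2 / (64 * M\<^sup>2) \<le> (sin ((real k * pi / M - (real j * pi / M - s)) / 2))\<^sup>2"
proof -
  define \<delta> where "\<delta> = (real k * pi / M - (real j * pi / M - s)) / 2"
  define d where "d = \<bar>real k - real j\<bar>"
  have M: "0 < M"
    by (simp add: M_def)
  have d: "1 \<le> d"
    using jk unfolding d_def by (cases "k < j") auto
  have "d * (pi / M) / 4 \<le> \<bar>((real k - real j) * (pi / M) + s) / 2\<bar>"
    unfolding d_def using d M s by (intro abs_half_shifted_gap_ge) (auto simp: d_def)
  also have "((real k - real j) * (pi / M) + s) / 2 = \<delta>"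
    unfolding \<delta>_def using M by (simp add: field_simps)
  finally have "d * pi / (4 * M) \<le> \<bar>\<delta>\<bar>"
    by simp
  moreover have "\<bar>\<delta>\<bar> \<le> pi / 2"
    using angles unfolding \<delta>_def by (simp add: abs_le_iff)
  ultimately have "d * pi / (16 * M) \<le> sin \<bar>\<delta>\<bar>"
    using sin_ge_quarter[of "\<bar>\<delta>\<bar>"] by simp
  moreover have "d / (8 * M) \<le> d * pi / (16 * M)"
    using d M pi_ge_two by (simp add: field_simps)
  ultimately have "d / (8 * M) \<le> sin \<bar>\<delta>\<bar>"
    by linarith
  moreover have "0 \<le> d / (8 * M)"
    using d M by simp
  ultimately have "(d / (8 * M))\<^sup>2 \<le> (sin \<bar>\<delta>\<bar>)\<^sup>2"
    by (intro power_mono)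
  also have "(sin \<bar>\<delta>\<bar>)\<^sup>2 = (sin \<delta>)\<^sup>2"
    by (cases "0 \<le> \<delta>") auto
  finally show ?thesis
    unfolding \<delta>_def[symmetric] d_def by (simp add: power_divide power_mult_distrib)
qed

lemma vD_1_sq_mult_le:
  fixes N j k :: nat and \<phi> :: real
  defines "M \<equiv> real N + 1"
  assumes j: "j \<in> {1..N}" and k: "k \<in> {1..N}" and sin_\<phi>: "sin (real j * pi / M) / 2 \<le> sin \<phi>"
  shows "(vD N j 1)\<^sup>2 * (vD N k 1)\<^sup>2 \<le> 16 * (sin ((\<phi> + real k * pi / M) / 2))\<^sup>2 / M\<^sup>2"
proof -
  define \<theta> where "\<theta> = real j * pi / M"
  define \<theta>\<^sub>k where "\<theta>\<^sub>k = real k * pi / M"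
  define \<sigma> where "\<sigma> = (\<phi> + \<theta>\<^sub>k) / 2"
  have M: "0 < M"
    by (simp add: M_def)
  have sin_j: "0 < sin \<theta>" and sin_k: "0 < sin \<theta>\<^sub>k"
    using sin_angle_pos[OF j] sin_angle_pos[OF k] unfolding \<theta>_def \<theta>\<^sub>k_def M_def by auto
  have "sin \<theta> * sin \<theta>\<^sub>k \<le> 2 * (sin \<phi> * sin \<theta>\<^sub>k)"
    using mult_right_mono[OF sin_\<phi>, of "sin \<theta>\<^sub>k"] sin_k unfolding \<theta>_def by simp
  also have "\<dots> \<le> 2 * (sin \<sigma>)\<^sup>2"
    unfolding \<sigma>_def using sin_mult_sin_le by simp
  finally have "(sin \<theta> * sin \<theta>\<^sub>k)\<^sup>2 \<le> (2 * (sin \<sigma>)\<^sup>2)\<^sup>2"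
    using sin_j sin_k by (intro power_mono) auto
  also have "\<dots> = 4 * (sin \<sigma>)\<^sup>2 * (sin \<sigma>)\<^sup>2"
    by (simp add: power2_eq_square)
  also have "\<dots> \<le> 4 * (sin \<sigma>)\<^sup>2 * 1"
    by (intro mult_left_mono) (auto simp: abs_square_le_1)
  finally show ?thesis
    unfolding vD_1_sq_eq M_def[symmetric] \<theta>_def[symmetric] \<theta>\<^sub>k_def[symmetric] \<sigma>_def[symmetric] using M
    by (simp add: field_simps power2_eq_square)
qed

text \<open>With \<open>\<sigma>\<close>, \<open>\<delta>\<close> the half sum and half difference of \<open>\<theta>\<^sub>k\<close> and \<open>\<phi> = \<theta>\<^sub>j - s\<close>,
  \<open>\<lambda>\<^sub>k - (2 - 2 cos \<phi>) = 4 sin \<sigma> sin \<delta>\<close>; the factor \<open>sin\<^sup>2 \<sigma>\<close> cancels against the weights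
  \<open>v\<^sub>j(1)\<^sup>2 v\<^sub>k(1)\<^sup>2\<close> and \<open>sin\<^sup>2 \<delta>\<close> grows like \<open>(k - j)\<^sup>2\<close>.\<close>

lemma resolvent_term_bound:
  fixes N j k :: nat and s w e :: real
  defines "M \<equiv> real N + 1"
  defines "\<theta> \<equiv> real j * pi / M"
  defines "r \<equiv> 2 - 2 * cos (\<theta> - s)"
  assumes j: "j \<in> {1..N}" and k: "k \<in> {1..N}" and jk: "k \<noteq> j"
    and s: "0 < s" "s \<le> pi / (2 * M)" and w: "0 < w" "w \<le> 1/50"
    and sin_shift: "sin \<theta> / 2 \<le> sin (\<theta> - s)"
  shows "(vD N j 1)\<^sup>2 * ((vD N k 1)\<^sup>2 / (nuT N w e k - Tpoly w e r)\<^sup>2) \<le> 128 / (real k - real j)\<^sup>2"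
proof -
  define \<theta>\<^sub>k where "\<theta>\<^sub>k = real k * pi / M"
  define \<sigma> where "\<sigma> = ((\<theta> - s) + \<theta>\<^sub>k) / 2"
  define \<delta> where "\<delta> = (\<theta>\<^sub>k - (\<theta> - s)) / 2"
  have M: "0 < M"
    by (simp add: M_def)
  note angle = shifted_angle_bounds[OF j s[unfolded M_def], folded M_def \<theta>_def]
  have \<theta>\<^sub>k: "0 < \<theta>\<^sub>k" "\<theta>\<^sub>k < pi"
    using k angle_less_pi[of k N] unfolding \<theta>\<^sub>k_def M_def by auto
  have "lamD N k - r = 2 * (cos (\<theta> - s) - cos \<theta>\<^sub>k)"
    unfolding r_def lamD_eq_cos M_def[symmetric] \<theta>\<^sub>k_def[symmetric] by simp
  also have "\<dots> = 4 * sin \<sigma> * sin \<delta>"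
    unfolding \<sigma>_def \<delta>_def cos_diff_cos by simp
  finally have D: "(lamD N k - r)\<^sup>2 = 16 * (sin \<sigma>)\<^sup>2 * (sin \<delta>)\<^sup>2"
    by (simp add: power_mult_distrib)
  have "lamD N k \<noteq> r"
    using shifted_angle_ne_lamD[OF j s[unfolded M_def] k] unfolding r_def \<theta>_def M_def .
  then have pos: "0 < (sin \<sigma>)\<^sup>2" "0 < (sin \<delta>)\<^sup>2"
    using D by (auto simp: zero_less_mult_iff)
  have "0 \<le> r" "r \<le> 4"
    using cos_le_one[of "\<theta> - s"] cos_ge_minus_one[of "\<theta> - s"] unfolding r_def by linarith+
  note den = Tpoly_diff_sq_ge[OF this w, of N k e]
  have num: "(vD N j 1)\<^sup>2 * (vD N k 1)\<^sup>2 \<le> 16 * (sin \<sigma>)\<^sup>2 / M\<^sup>2"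
    using vD_1_sq_mult_le[OF j k sin_shift[unfolded \<theta>_def M_def]] unfolding \<sigma>_def \<theta>\<^sub>k_def \<theta>_def M_def .
  have gap: "(real k - real j)\<^sup>2 / (64 * M\<^sup>2) \<le> (sin \<delta>)\<^sup>2"
    unfolding \<delta>_def \<theta>\<^sub>k_def \<theta>_def M_def
    using sin_half_gap_sq_ge[OF jk s[unfolded M_def]] \<theta>\<^sub>k angle(3,4) unfolding \<theta>\<^sub>k_def \<theta>_def M_def by simp
  have "0 < (lamD N k - r)\<^sup>2 / 2"
    using D pos by simp
  then have "0 < (nuT N w e k - Tpoly w e r)\<^sup>2 * ((lamD N k - r)\<^sup>2 / 2)"
    using den by (intro mult_pos_pos) linarith+
  then have "(vD N j 1)\<^sup>2 * ((vD N k 1)\<^sup>2 / (nuT N w e k - Tpoly w e r)\<^sup>2)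
      \<le> (vD N j 1)\<^sup>2 * (vD N k 1)\<^sup>2 / ((lamD N k - r)\<^sup>2 / 2)"
    using divide_left_mono[OF den, of "(vD N j 1)\<^sup>2 * (vD N k 1)\<^sup>2"] by simp
  also have "\<dots> \<le> (16 * (sin \<sigma>)\<^sup>2 / M\<^sup>2) / ((lamD N k - r)\<^sup>2 / 2)"
    using num \<open>0 < (lamD N k - r)\<^sup>2 / 2\<close> by (intro divide_right_mono) auto
  also have "\<dots> = 2 / (M\<^sup>2 * (sin \<delta>)\<^sup>2)"
    unfolding D using pos M by (simp add: field_simps)
  also have "\<dots> \<le> 2 / (M\<^sup>2 * ((real k - real j)\<^sup>2 / (64 * M\<^sup>2)))"
  proof -
    have "0 < (real k - real j)\<^sup>2 / (64 * M\<^sup>2)"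
      using jk M by simp
    then show ?thesis
      using gap M by (intro divide_left_mono mult_left_mono mult_pos_pos) auto
  qed
  also have "\<dots> = 128 / (real k - real j)\<^sup>2"
    using M by (simp add: field_simps)
  finally show ?thesis .
qed

lemma sum_inverse_sq_dist_le:
  assumes j: "j \<in> {1..N}"
  shows "(\<Sum>k\<in>{1..N} - {j}. 1 / (real k - real j)\<^sup>2) \<le> 4"
proof -
  have split: "{1..N} - {j} = {1..<j} \<union> {j+1..N}"
    using j by auto
  have "(\<Sum>k\<in>{1..N} - {j}. 1 / (real k - real j)\<^sup>2)
      = (\<Sum>k\<in>{1..<j}. 1 / (real k - real j)\<^sup>2) + (\<Sum>k\<in>{j+1..N}. 1 / (real k - real j)\<^sup>2)"
    unfolding split by (rule sum.union_disjoint) auto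
  also have "(\<Sum>k\<in>{1..<j}. 1 / (real k - real j)\<^sup>2) = (\<Sum>m\<in>{1..j-1}. 1 / (real m)\<^sup>2)"
    by (rule sum.reindex_bij_witness[of _ "\<lambda>m. j - m" "\<lambda>k. j - k"]) (auto simp: of_nat_diff power2_commute)
  also have "(\<Sum>k\<in>{j+1..N}. 1 / (real k - real j)\<^sup>2) = (\<Sum>m\<in>{1..N-j}. 1 / (real m)\<^sup>2)"
    by (rule sum.reindex_bij_witness[of _ "\<lambda>m. m + j" "\<lambda>k. k - j"]) (auto simp: of_nat_diff)
  also have "(\<Sum>m\<in>{1..j-1}. 1 / (real m)\<^sup>2) + (\<Sum>m\<in>{1..N-j}. 1 / (real m)\<^sup>2) \<le> 2 + 2"
  proof -
    have "0 \<le> 1 / real (j - 1)" "0 \<le> 1 / real (N - j)"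
      by simp_all
    then show ?thesis
      using sum_inverse_squares_le[of "j - 1"] sum_inverse_squares_le[of "N - j"] by argo
  qed
  finally show ?thesis
    by simp
qed

lemma resolvent_rest_bound:
  fixes N j :: nat and s w e :: real
  defines "M \<equiv> real N + 1"
  defines "\<theta> \<equiv> real j * pi / M"
  defines "x \<equiv> Tpoly w e (2 - 2 * cos (\<theta> - s))"
  assumes j: "j \<in> {1..N}" and s: "0 < s" "s \<le> pi / (2 * M)" and w: "0 < w" "w \<le> 1/50"
    and sin_shift: "sin \<theta> / 2 \<le> sin (\<theta> - s)"
  shows "(vD N j 1)\<^sup>2 * (\<Sum>k\<in>{1..N} - {j}. (vD N k 1)\<^sup>2 / (nuT N w e k - x)\<^sup>2) \<le> 512"
proof -
  have "(vD N j 1)\<^sup>2 * (\<Sum>k\<in>{1..N} - {j}. (vD N k 1)\<^sup>2 / (nuT N w e k - x)\<^sup>2)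
      = (\<Sum>k\<in>{1..N} - {j}. (vD N j 1)\<^sup>2 * ((vD N k 1)\<^sup>2 / (nuT N w e k - x)\<^sup>2))"
    by (simp add: sum_distrib_left)
  also have "\<dots> \<le> (\<Sum>k\<in>{1..N} - {j}. 128 * (1 / (real k - real j)\<^sup>2))"
    using resolvent_term_bound[OF j _ _ s[unfolded M_def] w sin_shift[unfolded \<theta>_def M_def]]
    unfolding x_def \<theta>_def M_def by (intro sum_mono) auto
  also have "\<dots> = 128 * (\<Sum>k\<in>{1..N} - {j}. 1 / (real k - real j)\<^sup>2)"
    by (simp add: sum_distrib_left)
  also have "\<dots> \<le> 128 * 4"
    using sum_inverse_sq_dist_le[OF j] by (intro mult_left_mono) auto
  finally show ?thesis
    by simp
qed

lemma shifted_secular_root_exists: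
  fixes N j :: nat and w e :: real
  defines "M \<equiv> real N + 1"
  defines "\<theta> \<equiv> real j * pi / M"
  assumes j: "j \<in> {1..N}" and w: "0 < w" "w \<le> 1/50"
  obtains s where "w * sin \<theta> / M \<le> s" "s \<le> 4 * w * sin \<theta> / M"
    "2 * w * secular N w e (Tpoly w e (2 - 2 * cos (\<theta> - s))) = 1"
proof -
  define s\<^sub>0 where "s\<^sub>0 = w * sin \<theta> / M"
  define s\<^sub>1 where "s\<^sub>1 = 4 * w * sin \<theta> / M"
  define r where "r s = 2 - 2 * cos (\<theta> - s)" for s
  define h where "h s = 2 * w * secular N w e (Tpoly w e (r s))" for s
  have M: "1 \<le> M"
    by (simp add: M_def)
  have w4: "w < 1/4"
    using w by simp
  have sin_\<theta>: "0 < sin \<theta>" "sin \<theta> \<le> 1"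
    using sin_angle_pos[OF j] unfolding \<theta>_def M_def by auto
  have w4pos: "0 < 4 * w"
    using w by simp
  have "0 < w * sin \<theta>" "w * sin \<theta> \<le> 4 * w" "0 < 4 * w * sin \<theta>" "4 * w * sin \<theta> \<le> 4 * w"
    using scaled_sin_bounds[OF w(1) sin_\<theta>(1)] scaled_sin_bounds[OF w4pos sin_\<theta>(1)] w by argo+
  note s\<^sub>0 = small_shift_bounds[OF M this(1,2) w(2), folded s\<^sub>0_def]
    and s\<^sub>1 = small_shift_bounds[OF M this(3,4) w(2), folded s\<^sub>1_def]
  have "s\<^sub>0 \<le> s\<^sub>1"
    using w sin_\<theta> M unfolding s\<^sub>0_def s\<^sub>1_def by (auto intro: divide_right_mono)
  have in_range: "0 < s" "s \<le> pi / (2 * (real N + 1))" if "s \<in> {s\<^sub>0..s\<^sub>1}" for s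
    using that s\<^sub>0(1) s\<^sub>1(3) by (auto simp: M_def)
  have r_range: "0 \<le> r s" "r s \<le> 4" for s
    using cos_le_one[of "\<theta> - s"] cos_ge_minus_one[of "\<theta> - s"] unfolding r_def by linarith+
  have pole_free: "nuT N w e k - Tpoly w e (r s) \<noteq> 0" if "s \<in> {s\<^sub>0..s\<^sub>1}" "k \<in> {1..N}" for s k
  proof
    assume "nuT N w e k - Tpoly w e (r s) = 0"
    then have "lamD N k = r s"
      using Tpoly_inj[OF lamD_bounds r_range _ w4] w unfolding nuT_eq_Tpoly by auto
    then show False
      using shifted_angle_ne_lamD[OF j in_range[OF that(1)] that(2)] unfolding r_def \<theta>_def M_def by simp
  qed
  have "continuous_on {s\<^sub>0..s\<^sub>1} h"
    unfolding h_def secular_def Tpoly_def r_def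
    using pole_free unfolding Tpoly_def r_def by (intro continuous_intros) auto
  moreover have "h s\<^sub>1 \<le> 1" "1 \<le> h s\<^sub>0"
    unfolding h_def r_def s\<^sub>0_def s\<^sub>1_def \<theta>_def M_def
    using secular_high_end[OF j w] secular_low_end[OF j w] by simp_all
  ultimately obtain s where "s\<^sub>0 \<le> s" "s \<le> s\<^sub>1" "h s = 1"
    using IVT2'[of h s\<^sub>1 1 s\<^sub>0] \<open>s\<^sub>0 \<le> s\<^sub>1\<close> by auto
  then show ?thesis
    using that unfolding s\<^sub>0_def s\<^sub>1_def h_def r_def by blast
qed

lemma sin_shift_half:
  fixes \<theta> s w :: real
  assumes sin_\<theta>: "0 < sin \<theta>" "sin \<theta> \<le> 1" and w: "0 < w" "w \<le> 1/50"
    and s: "0 \<le> s" "s \<le> 4 * w * sin \<theta>"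
  shows "sin \<theta> / 2 \<le> sin (\<theta> - s)"
proof -
  have w4pos: "0 < 4 * w"
    using w by simp
  have "4 * w * sin \<theta> \<le> 4 * w"
    using scaled_sin_bounds[OF w4pos sin_\<theta>(1)] by simp
  then have "s \<le> 1"
    using s w by linarith
  then have "sin \<theta> * (1 - 6 * w) \<le> sin (\<theta> - s)"
    using sin_shift_bounds(1)[OF _ s] sin_\<theta> by simp
  moreover have "sin \<theta> / 2 \<le> sin \<theta> * (1 - 6 * w)"
    using sin_\<theta> w by simp
  ultimately show ?thesis
    by linarith
qed

lemma secular_root_exists:
  fixes N j :: nat and w e :: real
  assumes j: "j \<in> {1..N}" and w: "0 < w" "w \<le> 1/50"
  obtains x where "nuT N w e (j - 1) < x" "x < nuT N w e j" "2 * w * secular N w e x = 1"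
    "w * (vD N j 1)\<^sup>2 / 2 \<le> nuT N w e j - x" "nuT N w e j - x \<le> 5 * w * (vD N j 1)\<^sup>2"
    "(vD N j 1)\<^sup>2 * (\<Sum>k\<in>{1..N} - {j}. (vD N k 1)\<^sup>2 / (nuT N w e k - x)\<^sup>2) \<le> 512"
proof -
  define M where "M = real N + 1"
  define \<theta> where "\<theta> = real j * pi / M"
  obtain s where s: "w * sin \<theta> / M \<le> s" "s \<le> 4 * w * sin \<theta> / M"
    and root: "2 * w * secular N w e (Tpoly w e (2 - 2 * cos (\<theta> - s))) = 1"
    using shifted_secular_root_exists[OF j w, of e] unfolding M_def \<theta>_def by blast
  define r where "r = 2 - 2 * cos (\<theta> - s)"
  have M: "1 \<le> M"
    by (simp add: M_def)
  have sin_\<theta>: "0 < sin \<theta>" "sin \<theta> \<le> 1"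
    using sin_angle_pos[OF j] unfolding \<theta>_def M_def by auto
  have w4pos: "0 < 4 * w"
    using w by simp
  have "0 < w * sin \<theta>" "w * sin \<theta> \<le> 4 * w" "0 < 4 * w * sin \<theta>" "4 * w * sin \<theta> \<le> 4 * w"
    using scaled_sin_bounds[OF w(1) sin_\<theta>(1)] scaled_sin_bounds[OF w4pos sin_\<theta>(1)] w by argo+
  note s\<^sub>0 = small_shift_bounds[OF M this(1,2) w(2)] and s\<^sub>1 = small_shift_bounds[OF M this(3,4) w(2)]
  have s_pos: "0 < s" and s_half: "s \<le> pi / (2 * (real N + 1))" and s_le: "s \<le> 4 * w * sin \<theta>"
    using s s\<^sub>0(1) s\<^sub>1(2,3) by (auto simp: M_def)
  note angle = shifted_angle_bounds[OF j s_pos s_half, folded M_def, folded \<theta>_def, folded r_def]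
  have r: "0 \<le> r" "r \<le> 4"
    using cos_le_one[of "\<theta> - s"] cos_ge_minus_one[of "\<theta> - s"] unfolding r_def by linarith+
  show ?thesis
  proof (rule that[of "Tpoly w e r"])
    show "nuT N w e (j - 1) < Tpoly w e r" "Tpoly w e r < nuT N w e j"
      unfolding nuT_eq_Tpoly using angle(1,2) r lamD_bounds w by (auto intro!: Tpoly_strict_mono)
    show "2 * w * secular N w e (Tpoly w e r) = 1"
      using root unfolding r_def .
    show "w * (vD N j 1)\<^sup>2 / 2 \<le> nuT N w e j - Tpoly w e r"
      "nuT N w e j - Tpoly w e r \<le> 5 * w * (vD N j 1)\<^sup>2"
      using gap_bounds[OF j w, of s e] s unfolding r_def \<theta>_def M_def by simp_all
    show "(vD N j 1)\<^sup>2 * (\<Sum>k\<in>{1..N} - {j}. (vD N k 1)\<^sup>2 / (nuT N w e k - Tpoly w e r)\<^sup>2) \<le> 512"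
      using resolvent_rest_bound[OF j s_pos s_half w] sin_shift_half[OF sin_\<theta> w _ s_le] s_pos
      unfolding r_def \<theta>_def M_def by simp
  qed
qed

lemma secular_strict_mono:
  assumes N: "1 \<le> N" and xy: "x < y" and no_pole: "\<forall>k\<in>{1..N}. nuT N w e k < x \<or> y < nuT N w e k"
  shows "secular N w e x < secular N w e y"
  unfolding secular_def
proof (rule sum_strict_mono)
  fix k
  assume k: "k \<in> {1..N}"
  have "0 < (nuT N w e k - x) * (nuT N w e k - y)"
  proof (cases "nuT N w e k < x")
    case True
    then show ?thesis
      using xy by (intro mult_neg_neg) auto
  next
    case False
    then show ?thesis
      using no_pole k xy by (intro mult_pos_pos) auto
  qed
  then show "(vD N k 1)\<^sup>2 / (nuT N w e k - x) < (vD N k 1)\<^sup>2 / (nuT N w e k - y)"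
    using vD_1_pos[OF k] xy by (intro divide_strict_left_mono) auto
qed (use N in auto)

lemma secular_root_unique:
  assumes N: "1 \<le> N" and w: "0 < w"
    and roots: "2 * w * secular N w e x = 1" "2 * w * secular N w e y = 1"
    and no_pole: "\<forall>k\<in>{1..N}. nuT N w e k < min x y \<or> max x y < nuT N w e k"
  shows "x = y"
proof (rule ccontr)
  assume "x \<noteq> y"
  then have "secular N w e (min x y) < secular N w e (max x y)"
    using N no_pole by (intro secular_strict_mono) auto
  moreover have "2 * w * secular N w e x = 2 * w * secular N w e y"
    using roots by simp
  then have "secular N w e x = secular N w e y"
    using w by simp
  ultimately show False
    by (cases "x \<le> y") (auto simp: min_def max_def)
qed

lemma secular_root_location:
  assumes N: "1 \<le> N" and w: "0 < w"
    and x_ne: "\<forall>k\<in>{1..N}. x \<noteq> nuT N w e k" and root: "2 * w * secular N w e x = 1"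
  obtains j where "j \<in> {1..N}" "x < nuT N w e j" "\<forall>k\<in>{1..N}. k < j \<longrightarrow> nuT N w e k < x"
proof -
  define K where "K = {k\<in>{1..N}. x < nuT N w e k}"
  have "finite K"
    unfolding K_def by simp
  have "K \<noteq> {}"
  proof
    assume "K = {}"
    have "(vD N k 1)\<^sup>2 / (nuT N w e k - x) \<le> 0" if "k \<in> {1..N}" for k
    proof -
      have "\<not> x < nuT N w e k" "x \<noteq> nuT N w e k"
        using \<open>K = {}\<close> x_ne that unfolding K_def by auto
      then show ?thesis
        by (intro divide_nonneg_neg) auto
    qed
    then have "secular N w e x \<le> 0"
      unfolding secular_def by (rule sum_nonpos)
    then have "2 * w * secular N w e x \<le> 0"
      using w by (intro mult_nonneg_nonpos) auto
    then show False
      using root by linarith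
  qed
  define j where "j = Min K"
  have "j \<in> {1..N}" "x < nuT N w e j"
    using Min_in[OF \<open>finite K\<close> \<open>K \<noteq> {}\<close>] unfolding j_def K_def by auto
  moreover have "nuT N w e k < x" if "k \<in> {1..N}" "k < j" for k
  proof -
    have "k \<notin> K"
      using that Min_le[OF \<open>finite K\<close>] unfolding j_def by force
    then show ?thesis
      using that x_ne unfolding K_def by force
  qed
  ultimately show ?thesis
    using that by blast
qed

definition perturbed_eigenvalue :: "nat \<Rightarrow> real \<Rightarrow> real \<Rightarrow> nat \<Rightarrow> real" where
  "perturbed_eigenvalue N w e j =
    (THE x. nuT N w e (j - 1) < x \<and> x < nuT N w e j \<and> 2 * w * secular N w e x = 1)"

lemma no_pole_between:
  assumes j: "j \<in> {1..N}" and w: "0 \<le> w" "w < 1/4"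
    and x: "\<forall>k\<in>{1..N}. k < j \<longrightarrow> nuT N w e k < x" "x < nuT N w e j"
    and y: "nuT N w e (j - 1) < y" "y < nuT N w e j"
  shows "\<forall>k\<in>{1..N}. nuT N w e k < min x y \<or> max x y < nuT N w e k"
proof
  fix k
  assume k: "k \<in> {1..N}"
  show "nuT N w e k < min x y \<or> max x y < nuT N w e k"
  proof (cases "k < j")
    case True
    then have "nuT N w e k \<le> nuT N w e (j - 1)"
      using j w by (intro nuT_mono) auto
    moreover have "nuT N w e k < x"
      using x(1) k True by blast
    ultimately show ?thesis
      using y(1) by simp
  next
    case False
    then have "nuT N w e j \<le> nuT N w e k"
      using k w by (intro nuT_mono) auto
    then show ?thesis
      using x(2) y(2) by simp
  qed
qed

lemma perturbed_eigenvalue: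
  fixes N j :: nat and w e :: real
  defines "\<xi> \<equiv> perturbed_eigenvalue N w e j"
  assumes j: "j \<in> {1..N}" and w: "0 < w" "w \<le> 1/50"
  shows "nuT N w e (j - 1) < \<xi>" "\<xi> < nuT N w e j" "2 * w * secular N w e \<xi> = 1"
    "w * (vD N j 1)\<^sup>2 / 2 \<le> nuT N w e j - \<xi>" "nuT N w e j - \<xi> \<le> 5 * w * (vD N j 1)\<^sup>2"
    "(vD N j 1)\<^sup>2 * (\<Sum>k\<in>{1..N} - {j}. (vD N k 1)\<^sup>2 / (nuT N w e k - \<xi>)\<^sup>2) \<le> 512"
proof -
  obtain x where x: "nuT N w e (j - 1) < x" "x < nuT N w e j" "2 * w * secular N w e x = 1"
    "w * (vD N j 1)\<^sup>2 / 2 \<le> nuT N w e j - x" "nuT N w e j - x \<le> 5 * w * (vD N j 1)\<^sup>2"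
    "(vD N j 1)\<^sup>2 * (\<Sum>k\<in>{1..N} - {j}. (vD N k 1)\<^sup>2 / (nuT N w e k - x)\<^sup>2) \<le> 512"
    using secular_root_exists[OF j w] by blast
  have w4: "w < 1/4"
    using w by simp
  have below: "\<forall>k\<in>{1..N}. k < j \<longrightarrow> nuT N w e k < x"
  proof (intro ballI impI)
    fix k
    assume "k \<in> {1..N}" "k < j"
    then have "nuT N w e k \<le> nuT N w e (j - 1)"
      using j w by (intro nuT_mono) auto
    then show "nuT N w e k < x"
      using x(1) by linarith
  qed
  have "y = x" if "nuT N w e (j - 1) < y" "y < nuT N w e j" "2 * w * secular N w e y = 1" for y
    using secular_root_unique[OF _ w(1) that(3) x(3)] no_pole_between[OF j _ w4 below x(2) that(1,2)] j w
    by (simp add: min.commute max.commute)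
  then have "\<xi> = x"
    unfolding \<xi>_def perturbed_eigenvalue_def using x(1-3) by (intro the_equality) blast+
  then show "nuT N w e (j - 1) < \<xi>" "\<xi> < nuT N w e j" "2 * w * secular N w e \<xi> = 1"
    "w * (vD N j 1)\<^sup>2 / 2 \<le> nuT N w e j - \<xi>" "nuT N w e j - \<xi> \<le> 5 * w * (vD N j 1)\<^sup>2"
    "(vD N j 1)\<^sup>2 * (\<Sum>k\<in>{1..N} - {j}. (vD N k 1)\<^sup>2 / (nuT N w e k - \<xi>)\<^sup>2) \<le> 512"
    using x by simp_all
qed

section \<open>The spectra of \<open>T\<^sub>\<omega> + P\<close> and of the block operators\<close>

lemma vvec_eigenvector:
  assumes "k \<in> {1..N}"
  shows "eigenvector (Tom N w e) (vvec N k) (nuT N w e k)"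
proof -
  have "vvec N k $ 0 \<noteq> 0"
    using vD_1_pos[OF assms] assms by (simp add: vvec_def)
  then have "vvec N k \<noteq> 0\<^sub>v N"
    using assms by auto
  then show ?thesis
    unfolding eigenvector_def by (simp add: Tom_mult_vvec)
qed

lemma Amat_eigenvectors:
  assumes k: "k \<in> {1..N}" and w: "0 \<le> w" "w < 1/4" and e: "0 \<le> e"
  shows "eigenvector (Amat N w e) (stackv (vvec N k) (- (\<i> * sqrt (nuT N w e k)))) (\<i> * sqrt (nuT N w e k))
    \<and> eigenvector (Amat N w e) (stackv (vvec N k) (\<i> * sqrt (nuT N w e k))) (- (\<i> * sqrt (nuT N w e k)))"
proof -
  have "0 \<le> nuT N w e k"
    using nuT_ge_eta[OF w, of k N e] k e by simp
  then show ?thesis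
    unfolding Amat_eq_wave_mat using wave_mat_eigenvectors[OF Tom_carrier vvec_eigenvector[OF k]] by simp
qed

lemma perturbed_eigenvalue_ne_nuT:
  assumes j: "j \<in> {1..N}" and w: "0 < w" "w \<le> 1/50" and k: "k \<in> {1..N}"
  shows "perturbed_eigenvalue N w e j \<noteq> nuT N w e k"
proof -
  have "nuT N w e k \<le> nuT N w e (j - 1) \<or> nuT N w e j \<le> nuT N w e k"
    using nuT_mono[of k "j - 1" N w e] nuT_mono[of j k N w e] j k w by (cases "k < j") auto
  then show ?thesis
    using perturbed_eigenvalue(1,2)[OF j w, of e] by auto
qed

lemma perturbed_eigenvalue_pos:
  assumes j: "j \<in> {1..N}" and w: "0 < w" "w \<le> 1/50" and e: "0 \<le> e"
  shows "0 < perturbed_eigenvalue N w e j"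
proof -
  have "e \<le> nuT N w e (j - 1)"
    using j w by (intro nuT_ge_eta) auto
  then show ?thesis
    using perturbed_eigenvalue(1)[OF j w, of e] e by linarith
qed

lemma nuT_less_perturbed_eigenvalue_Suc:
  assumes "j \<in> {1..<N}" "0 < w" "w \<le> 1/50"
  shows "nuT N w e j < perturbed_eigenvalue N w e (j + 1)"
  using perturbed_eigenvalue(1)[of "j + 1" N w e] assms by simp

lemma perturbed_eigenvector:
  assumes j: "j \<in> {1..N}" and w: "0 < w" "w \<le> 1/50"
  shows "eigenvector (Tom N w e + Pmat N w) (wvec N w e (perturbed_eigenvalue N w e j)) (perturbed_eigenvalue N w e j)"
  using j perturbed_eigenvalue_ne_nuT[OF j w] perturbed_eigenvalue(3)[OF j w]
  by (intro wvec_eigenvector w(1)) auto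

lemma Tom_Pmat_eigenvalue_iff:
  assumes N: "1 \<le> N" and w: "0 < w" "w \<le> 1/50"
  shows "eigenvalue (Tom N w e + Pmat N w) x \<longleftrightarrow> (\<exists>j\<in>{1..N}. x = perturbed_eigenvalue N w e j)"
proof
  assume ev: "eigenvalue (Tom N w e + Pmat N w) x"
  have w4: "w < 1/4"
    using w by simp
  note secular = Tom_Pmat_eigenvalue_secular[OF ev N w(1) w4]
  obtain j where j: "j \<in> {1..N}" "x < nuT N w e j" "\<forall>k\<in>{1..N}. k < j \<longrightarrow> nuT N w e k < x"
    using secular_root_location[OF N w(1) secular] by blast
  note \<xi> = perturbed_eigenvalue[OF j(1) w, of e]
  have "x = perturbed_eigenvalue N w e j"
    using secular_root_unique[OF N w(1) secular(2) \<xi>(3)]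
      no_pole_between[OF j(1) _ w4 j(3,2) \<xi>(1,2)] w by simp
  with j(1) show "\<exists>j\<in>{1..N}. x = perturbed_eigenvalue N w e j" ..
next
  assume "\<exists>j\<in>{1..N}. x = perturbed_eigenvalue N w e j"
  then show "eigenvalue (Tom N w e + Pmat N w) x"
    using perturbed_eigenvector[OF _ w] unfolding eigenvalue_def by blast
qed

lemma perturbed_eigenvalue_shift_bounds:
  assumes j: "j \<in> {1..N}" and w: "0 < w" "w \<le> 1/50"
  shows "1/20 * w * (vD N j 1)\<^sup>2 \<le> \<bar>perturbed_eigenvalue N w e j - nuT N w e j\<bar>"
    "\<bar>perturbed_eigenvalue N w e j - nuT N w e j\<bar> \<le> 7 * w * (vD N j 1)\<^sup>2"
  using perturbed_eigenvalue(2,4,5)[OF j w, of e] w by (simp_all add: abs_if)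

text \<open>By the secular equation the first entry of the normalised \<open>w\<^sub>j\<close> is \<open>1 / (2\<omega> \<parallel>u\<parallel>)\<close> with
  \<open>\<parallel>u\<parallel>\<^sup>2 = v\<^sub>j(1)\<^sup>2 / d\<^sup>2 + R\<close>, \<open>d = \<nu>\<^sub>j - \<xi>\<^sub>j \<sim> \<omega> v\<^sub>j(1)\<^sup>2\<close> and \<open>v\<^sub>j(1)\<^sup>2 R\<close> bounded; the main term
  \<open>v\<^sub>j(1)\<^sup>2 / d\<^sup>2 \<sim> 1 / (\<omega>\<^sup>2 v\<^sub>j(1)\<^sup>2)\<close> dominates.\<close>

lemma wvec_nth_0_sq_bounds:
  fixes N j :: nat and w e :: real
  defines "x \<equiv> perturbed_eigenvalue N w e j"
  assumes j: "j \<in> {1..N}" and w: "0 < w" "w \<le> 1/50"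
  shows "1/20 * (vD N j 1)\<^sup>2 \<le> (wvec N w e x $ 0)\<^sup>2" "(wvec N w e x $ 0)\<^sup>2 \<le> 7 * (vD N j 1)\<^sup>2"
proof -
  define a where "a = (vD N j 1)\<^sup>2"
  define d where "d = nuT N w e j - x"
  define R where "R = (\<Sum>k\<in>{1..N} - {j}. (vD N k 1)\<^sup>2 / (nuT N w e k - x)\<^sup>2)"
  define t where "t = 4 * w\<^sup>2 * (a / d\<^sup>2 + R)"
  note \<xi> = perturbed_eigenvalue[OF j w, of e, folded x_def]
  have N: "1 \<le> N"
    using j by simp
  have a: "0 < a"
    using vD_1_pos[OF j] by (simp add: a_def)
  have d: "w * a / 2 \<le> d" "d \<le> 5 * w * a" and aR: "a * R \<le> 512"
    using \<xi>(4-6) unfolding a_def d_def R_def by simp_all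
  have "0 < w * a / 2"
    using a w by simp
  then have "0 < d"
    using d(1) by linarith
  have "0 \<le> R"
    unfolding R_def by (intro sum_nonneg) auto
  have sum_eq: "(\<Sum>k=1..N. (vD N k 1)\<^sup>2 / (nuT N w e k - x)\<^sup>2) = a / d\<^sup>2 + R"
    unfolding R_def a_def d_def using j by (simp add: sum.remove[of _ j])
  have "0 < a / d\<^sup>2 + R"
    using a \<open>0 < d\<close> \<open>0 \<le> R\<close> by (simp add: add_pos_nonneg)
  then have "0 < t"
    unfolding t_def using w by simp
  have first: "(wvec N w e x $ 0)\<^sup>2 = 1 / t"
    using wvec_nth_0[OF N w(1) \<xi>(3)] sum_eq \<open>0 < a / d\<^sup>2 + R\<close> w
    unfolding t_def by (simp add: power_divide power_mult_distrib)
  define u where "u = w * a / d"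
  have u: "1/5 \<le> u" "u \<le> 2"
    unfolding u_def using d \<open>0 < d\<close> by (simp_all add: field_simps)
  have "a * t = 4 * u\<^sup>2 + 4 * w\<^sup>2 * (a * R)"
    unfolding t_def u_def using \<open>0 < d\<close> by (simp add: field_simps power2_eq_square)
  moreover have "1/25 \<le> u\<^sup>2" "u\<^sup>2 \<le> 4"
    using power_mono[OF u(1), of 2] power_mono[OF u(2), of 2] u by (simp_all add: power2_eq_square)
  moreover have "0 \<le> 4 * w\<^sup>2 * (a * R)"
    using a \<open>0 \<le> R\<close> by simp
  moreover have "4 * w\<^sup>2 * (a * R) \<le> (4 * (1/2500)) * 512"
  proof -
    have "w\<^sup>2 \<le> (1/50)\<^sup>2"
      using w by (intro power_mono) auto
    then show ?thesis
      using aR a \<open>0 \<le> R\<close> by (intro mult_mono) (auto simp: power2_eq_square)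
  qed
  ultimately have "4/25 \<le> a * t" "a * t \<le> 20"
    by linarith+
  then show "1/20 * (vD N j 1)\<^sup>2 \<le> (wvec N w e x $ 0)\<^sup>2" "(wvec N w e x $ 0)\<^sup>2 \<le> 7 * (vD N j 1)\<^sup>2"
    unfolding first a_def[symmetric] using \<open>0 < t\<close> by (simp_all add: field_simps)
qed

lemma Aom_eigenvectors:
  assumes j: "j \<in> {1..N}" and w: "0 < w" "w \<le> 1/50" and e: "0 \<le> e"
  defines "\<xi> \<equiv> perturbed_eigenvalue N w e j"
  shows "eigenvector (Aom N w e) (stackv (wvec N w e \<xi>) (- (\<i> * sqrt \<xi>))) (\<i> * sqrt \<xi>)"
    "eigenvector (Aom N w e) (stackv (wvec N w e \<xi>) (\<i> * sqrt \<xi>)) (- (\<i> * sqrt \<xi>))"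
  unfolding Aom_eq_wave_mat \<xi>_def
  using wave_mat_eigenvectors[OF _ perturbed_eigenvector[OF j w]] perturbed_eigenvalue_pos[OF j w e]
  by simp_all

lemma Aom_eigenvalue_iff:
  assumes N: "1 \<le> N" and w: "0 < w" "w \<le> 1/50" and e: "0 \<le> e"
  shows "eigenvalue (Aom N w e) z \<longleftrightarrow>
    (\<exists>j\<in>{1..N}. z = \<i> * sqrt (perturbed_eigenvalue N w e j) \<or> z = - (\<i> * sqrt (perturbed_eigenvalue N w e j)))"
proof
  assume "eigenvalue (Aom N w e) z"
  then have "eigenvalue (map_mat complex_of_real (Tom N w e + Pmat N w)) (- (z * z))"
    unfolding Aom_eq_wave_mat by (intro wave_mat_eigenvalue) auto
  then obtain u where u: "eigenvector (map_mat complex_of_real (Tom N w e + Pmat N w)) u (- (z * z))"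
    unfolding eigenvalue_def by blast
  have w4: "w < 1/4"
    using w by simp
  define r where "r = Re (- (z * z))"
  note real = Tom_Pmat_complex_eigenvalue[OF u N w(1) w4, folded r_def]
  have "eigenvalue (Tom N w e + Pmat N w) r"
    using wvec_eigenvector[OF N w(1) real(2,3)] unfolding eigenvalue_def by blast
  then obtain j where j: "j \<in> {1..N}" "r = perturbed_eigenvalue N w e j"
    using Tom_Pmat_eigenvalue_iff[OF N w] by blast
  define q where "q = complex_of_real (sqrt (perturbed_eigenvalue N w e j))"
  have "q * q = complex_of_real (perturbed_eigenvalue N w e j)"
    unfolding q_def using perturbed_eigenvalue_pos[OF j(1) w e] by (simp flip: of_real_mult)
  moreover have "z * z = - complex_of_real (perturbed_eigenvalue N w e j)"
    using real(1) j(2) by (metis minus_minus)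
  moreover have "(z - \<i> * q) * (z + \<i> * q) = z * z + q * q"
    by (simp add: algebra_simps)
  ultimately have "(z - \<i> * q) * (z + \<i> * q) = 0"
    by simp
  then have "z = \<i> * q \<or> z = - (\<i> * q)"
    by (simp add: eq_neg_iff_add_eq_0)
  with j(1) show "\<exists>j\<in>{1..N}. z = \<i> * sqrt (perturbed_eigenvalue N w e j) \<or> z = - (\<i> * sqrt (perturbed_eigenvalue N w e j))"
    unfolding q_def by blast
next
  assume "\<exists>j\<in>{1..N}. z = \<i> * sqrt (perturbed_eigenvalue N w e j) \<or> z = - (\<i> * sqrt (perturbed_eigenvalue N w e j))"
  then show "eigenvalue (Aom N w e) z"
    using Aom_eigenvectors[OF _ w e] unfolding eigenvalue_def by blast
qed

theorem theorem3p6: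
  shows "\<exists>\<omega>0 > 0. \<exists>c C. 0 < c \<and> 0 < C \<and>
    (\<forall>N \<ge> 1. \<forall>\<eta> \<ge> 0. \<forall>\<omega>. 0 < \<omega> \<and> \<omega> < \<omega>0 \<longrightarrow>
      (\<forall>j\<in>{1..N}.
          eigenvector (Amat N \<omega> \<eta>) (stackv (vvec N j) (- (\<i> * sqrt (nuT N \<omega> \<eta> j)))) (\<i> * sqrt (nuT N \<omega> \<eta> j))
        \<and> eigenvector (Amat N \<omega> \<eta>) (stackv (vvec N j) (\<i> * sqrt (nuT N \<omega> \<eta> j))) (- (\<i> * sqrt (nuT N \<omega> \<eta> j))))
      \<and> (\<exists>\<xi> :: nat \<Rightarrow> real.
          (\<forall>x. eigenvalue (Tom N \<omega> \<eta> + Pmat N \<omega>) x \<longleftrightarrow> (\<exists>j\<in>{1..N}. x = \<xi> j))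
        \<and> (\<forall>j\<in>{1..N}. \<xi> j < nuT N \<omega> \<eta> j)
        \<and> (\<forall>j\<in>{1..<N}. nuT N \<omega> \<eta> j < \<xi> (j + 1))
        \<and> (\<forall>j\<in>{1..N}.
              c * \<omega> * (vD N j 1)\<^sup>2 \<le> \<bar>\<xi> j - nuT N \<omega> \<eta> j\<bar>
            \<and> \<bar>\<xi> j - nuT N \<omega> \<eta> j\<bar> \<le> C * \<omega> * (vD N j 1)\<^sup>2)
        \<and> (\<forall>j\<in>{1..N}. eigenvector (Tom N \<omega> \<eta> + Pmat N \<omega>) (wvec N \<omega> \<eta> (\<xi> j)) (\<xi> j))
        \<and> (\<forall>j\<in>{1..N}.
              c * (vD N j 1)\<^sup>2 \<le> (wvec N \<omega> \<eta> (\<xi> j) $ 0)\<^sup>2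
            \<and> (wvec N \<omega> \<eta> (\<xi> j) $ 0)\<^sup>2 \<le> C * (vD N j 1)\<^sup>2)
        \<and> (\<forall>z. eigenvalue (Aom N \<omega> \<eta>) z \<longleftrightarrow>
              (\<exists>j\<in>{1..N}. z = \<i> * sqrt (\<xi> j) \<or> z = - (\<i> * sqrt (\<xi> j))))
        \<and> (\<forall>j\<in>{1..N}.
              eigenvector (Aom N \<omega> \<eta>) (stackv (wvec N \<omega> \<eta> (\<xi> j)) (- (\<i> * sqrt (\<xi> j)))) (\<i> * sqrt (\<xi> j))
            \<and> eigenvector (Aom N \<omega> \<eta>) (stackv (wvec N \<omega> \<eta> (\<xi> j)) (\<i> * sqrt (\<xi> j))) (- (\<i> * sqrt (\<xi> j))))))"
  apply (rule exI[of _ "1/50"], intro conjI, simp)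
  apply (rule exI[of _ "1/20"], rule exI[of _ 7], intro conjI allI impI)
     apply simp
    apply simp
  subgoal for N \<eta> \<omega>
    by (simp add: Amat_eigenvectors)
  subgoal for N \<eta> \<omega>
    by (intro exI[of _ "perturbed_eigenvalue N \<omega> \<eta>"] conjI allI ballI;
        rule Tom_Pmat_eigenvalue_iff perturbed_eigenvalue(2) nuT_less_perturbed_eigenvalue_Suc
          perturbed_eigenvalue_shift_bounds perturbed_eigenvector wvec_nth_0_sq_bounds
          Aom_eigenvalue_iff Aom_eigenvectors;
        simp)
  done

end
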